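(* Let $d\ge1$, $n\ge3$ and $\lambda\in\mathcal{P}(d,n)$. Then $\lambda\in\mathcal{R}(d,n)$ if and only if the trivial representation of the subgroup $\langle s_1,s_2\rangle\cong\mathfrak{S}_3$ of $G(d,1,n)$ is not a direct summand of $\mathrm{Res}^{G(d,1,n)}_{\langle s_1,s_2\rangle}(E^\lambda)$.
   Context: Let $d,n\ge1$ be integers and $u$ an indeterminate. The Yokonuma–Hecke algebra $\mathrm{Y}_{d,n}(u)$ is the associative $\mathbb{C}[u,u^{-1}]$-algebra generated by $g_1,\dots,g_{n-1},t_1,\dots,t_n$ subject to: $g_ig_j=g_jg_i$ for $|i-j|>1$; $g_ig_{i+1}g_i=g_{i+1}g_ig_{i+1}$ for $1\le i\le n-2$; $t_it_j=t_jt_i$ for all $i,j$; $t_jg_i=g_it_{s_i(j)}$ for all $i,j$, where $s_i$ is the transposition $(i,i+1)$; $t_j^d=1$ for all $j$; and $g_i^2=1+(u-1)e_i+(u-1)e_ig_i$, where $e_i=\frac1d\sum_{s=0}^{d-1}t_i^st_{i+1}^{-s}$. For $n\ge3$, the Yokonuma–Temperley–Lieb algebra $\mathrm{YTL}_{d,n}(u)$ is the quotient of $\mathrm{Y}_{d,n}(u)$ by the two-sided ideal generated by the elements $g_ig_{i+1}g_i+g_ig_{i+1}+g_{i+1}g_i+g_i+g_{i+1}+1$, $1\le i\le n-2$. For a $\mathbb{C}[u,u^{-1}]$-algebra $B$, write $\mathbb{C}(u)B=\mathbb{C}(u)\otimes_{\mathbb{C}[u,u^{-1}]}B$. A $d$-partition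 of $n$ is a $d$-tuple $\lambda=(\lambda^{(0)},\dots,\lambda^{(d-1)})$ of partitions whose sizes sum to $n$; $\mathcal{P}(d,n)$ denotes the set of them. Let $G(d,1,n)=(\mathbb{Z}/d\mathbb{Z})^n\rtimes\mathfrak{S}_n$, with $s_i\in\mathfrak S_n\subset G(d,1,n)$ the transposition $(i,i+1)$. Its irreducible complex representations $E^\lambda$, $\lambda\in\mathcal P(d,n)$, are labelled in the standard (Specht) way: with $k_i=|\lambda^{(i)}|$, $E^\lambda$ is induced from $\prod_{i=0}^{d-1}G(d,1,k_i)$ of the outer tensor product whose $i$-th factor is the representation on which each coordinate of $(\mathbb Z/d\mathbb Z)^{k_i}$ acts by the character sending a generator to $\xi^i$ ($\xi$ a fixed primitive $d$-th root of unity) and $\mathfrak{S}_{k_i}$ acts through the Specht module of $\lambda^{(i)}$. The algebra $\mathbb{C}(u)\mathrm{Y}_{d,n}(u)$ is split semisimple with irreducible representations $\rho^\lambda$, $\lambda\in\mathcal P(d,n)$, where $\rho^\lambda$ specializes at $u=1$ to $E^\lambda$. Let $\mathcal{R}(d,n)$ be the set of $\lambda\in\mathcal P(d,n)$ such that $\rho^\lambda(g_1g_2g_1+g_1g_2+g_2g_1+g_1+g_2+1)=0$; equivalently the $\rho^\lambda$ with $\lambda\in\mathcal R(d,n)$ are exactly the irreducible representations of $\mathbb{C}(u)\mathrm{YTL}_{d,n}(u)$. *)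

theory Defs
  imports Complex_Main "Jordan_Normal_Form.Matrix" "HOL-Computational_Algebra.Fraction_Field"
    "HOL-Computational_Algebra.Polynomial" "HOL-Combinatorics.Permutations"
begin

definition is_partition :: "nat list \<Rightarrow> bool" where
  "is_partition p \<longleftrightarrow> sorted_wrt (\<ge>) p \<and> (\<forall>x\<in>set p. 0 < x)"

definition dpartitions :: "nat \<Rightarrow> nat \<Rightarrow> (nat \<Rightarrow> nat list) set" where
  "dpartitions d n = {lam. (\<forall>i<d. is_partition (lam i)) \<and> (\<forall>i\<ge>d. lam i = [])
      \<and> (\<Sum>i<d. sum_list (lam i)) = n}"

text \<open>An element (a, sigma) stands for t_1^(a 1) ... t_n^(a n) sigma, where
  sigma t_j sigma^(-1) = t_(sigma j).  Positions are 1..n.\<close>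
type_synonym gelt = "(nat \<Rightarrow> nat) \<times> (nat \<Rightarrow> nat)"

definition Gset :: "nat \<Rightarrow> nat \<Rightarrow> gelt set" where
  "Gset d n = {(a, \<sigma>). (\<forall>j. (j \<in> {1..n} \<longrightarrow> a j < d) \<and> (j \<notin> {1..n} \<longrightarrow> a j = 0))
                      \<and> \<sigma> permutes {1..n}}"

definition gmul :: "nat \<Rightarrow> gelt \<Rightarrow> gelt \<Rightarrow> gelt" where
  "gmul d x y = ((\<lambda>k. (fst x k + fst y (inv_into UNIV (snd x) k)) mod d), snd x \<circ> snd y)"

definition gT :: "nat \<Rightarrow> nat \<Rightarrow> gelt" where
  "gT d j = ((\<lambda>k. if k = j then 1 mod d else 0), id)"

definition gS :: "nat \<Rightarrow> gelt" where
  "gS i = ((\<lambda>k. 0), Transposition.transpose i (Suc i))"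

definition gconv :: "nat \<Rightarrow> nat \<Rightarrow> (gelt \<Rightarrow> complex) \<Rightarrow> (gelt \<Rightarrow> complex) \<Rightarrow> gelt \<Rightarrow> complex" where
  "gconv d n f h = (\<lambda>x. \<Sum>(y,z) \<in> {(y,z). y \<in> Gset d n \<and> z \<in> Gset d n \<and> gmul d y z = x}. f y * h z)"

definition gdelta :: "gelt \<Rightarrow> gelt \<Rightarrow> complex" where
  "gdelta g = (\<lambda>x. if x = g then 1 else 0)"

definition galg :: "nat \<Rightarrow> nat \<Rightarrow> (gelt \<Rightarrow> complex) set" where
  "galg d n = {f. \<forall>x. x \<notin> Gset d n \<longrightarrow> f x = 0}"

definition gact :: "nat \<Rightarrow> nat \<Rightarrow> gelt \<Rightarrow> (gelt \<Rightarrow> complex) \<Rightarrow> gelt \<Rightarrow> complex" where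
  "gact d n g f = gconv d n (gdelta g) f"

definition offs :: "(nat \<Rightarrow> nat list) \<Rightarrow> nat \<Rightarrow> nat" where
  "offs lam i = (\<Sum>l<i. sum_list (lam l))"

text \<open>Entry of the standard multitableau: component i, row r, column c (0-based), filled row by row.\<close>
definition tentry :: "(nat \<Rightarrow> nat list) \<Rightarrow> nat \<Rightarrow> nat \<Rightarrow> nat \<Rightarrow> nat" where
  "tentry lam i r c = offs lam i + sum_list (take r (lam i)) + c + 1"

definition rowset :: "(nat \<Rightarrow> nat list) \<Rightarrow> nat \<Rightarrow> nat \<Rightarrow> nat set" where
  "rowset lam i r = {tentry lam i r c | c. c < lam i ! r}"

definition colset :: "(nat \<Rightarrow> nat list) \<Rightarrow> nat \<Rightarrow> nat \<Rightarrow> nat set" where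
  "colset lam i c = {tentry lam i r c | r. r < length (lam i) \<and> c < lam i ! r}"

definition rowgroup :: "nat \<Rightarrow> nat \<Rightarrow> (nat \<Rightarrow> nat list) \<Rightarrow> (nat \<Rightarrow> nat) set" where
  "rowgroup d n lam = {\<sigma>. \<sigma> permutes {1..n} \<and>
      (\<forall>i<d. \<forall>r<length (lam i). \<sigma> ` rowset lam i r = rowset lam i r)}"

definition colgroup :: "nat \<Rightarrow> nat \<Rightarrow> (nat \<Rightarrow> nat list) \<Rightarrow> (nat \<Rightarrow> nat) set" where
  "colgroup d n lam = {\<sigma>. \<sigma> permutes {1..n} \<and>
      (\<forall>i<d. \<forall>c. \<sigma> ` colset lam i c = colset lam i c)}"

definition blk :: "nat \<Rightarrow> (nat \<Rightarrow> nat list) \<Rightarrow> nat \<Rightarrow> nat" where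
  "blk d lam j = (LEAST i. i < d \<and> offs lam i < j \<and> j \<le> offs lam (Suc i))"

definition xi :: "nat \<Rightarrow> complex" where
  "xi d = cis (2 * pi / real d)"

definition chi :: "nat \<Rightarrow> nat \<Rightarrow> (nat \<Rightarrow> nat list) \<Rightarrow> (nat \<Rightarrow> nat) \<Rightarrow> complex" where
  "chi d n lam a = (\<Prod>j\<in>{1..n}. xi d ^ (blk d lam j * a j))"

definition echi :: "nat \<Rightarrow> nat \<Rightarrow> (nat \<Rightarrow> nat list) \<Rightarrow> gelt \<Rightarrow> complex" where
  "echi d n lam = (\<lambda>x. if x \<in> Gset d n \<and> snd x = id
       then cnj (chi d n lam (fst x)) / of_nat d ^ n else 0)"

definition ysym :: "nat \<Rightarrow> nat \<Rightarrow> (nat \<Rightarrow> nat list) \<Rightarrow> gelt \<Rightarrow> complex" where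
  "ysym d n lam = gconv d n
     (\<lambda>x. if fst x = (\<lambda>_. 0) \<and> snd x \<in> rowgroup d n lam then 1 else 0)
     (\<lambda>x. if fst x = (\<lambda>_. 0) \<and> snd x \<in> colgroup d n lam then of_int (sign (snd x)) else 0)"

text \<open>E^lam realised as the left ideal C[G] * e_chi * c_T of the group algebra
  (isomorphic to Ind from prod G(d,1,k_i) of (chi tensor Specht module)).\<close>
definition Emod :: "nat \<Rightarrow> nat \<Rightarrow> (nat \<Rightarrow> nat list) \<Rightarrow> (gelt \<Rightarrow> complex) set" where
  "Emod d n lam = {gconv d n f (gconv d n (echi d n lam) (ysym d n lam)) | f. f \<in> galg d n}"

definition triv_summand :: "nat \<Rightarrow> nat \<Rightarrow> (nat \<Rightarrow> nat list) \<Rightarrow> bool" where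
  "triv_summand d n lam \<longleftrightarrow> (\<exists>v W.
      v \<in> Emod d n lam \<and> v \<noteq> (\<lambda>_. 0) \<and>
      gact d n (gS 1) v = v \<and> gact d n (gS 2) v = v \<and>
      W \<subseteq> Emod d n lam \<and> (\<lambda>_. 0) \<in> W \<and>
      (\<forall>w1\<in>W. \<forall>w2\<in>W. (\<lambda>x. w1 x + w2 x) \<in> W) \<and>
      (\<forall>c::complex. \<forall>w\<in>W. (\<lambda>x. c * w x) \<in> W) \<and>
      (\<forall>w\<in>W. gact d n (gS 1) w \<in> W \<and> gact d n (gS 2) w \<in> W) \<and>
      (\<forall>x\<in>Emod d n lam. \<exists>!(c, w). w \<in> W \<and> x = (\<lambda>g. c * v g + w g)))"

type_synonym ratf = "complex poly fract"

definition uu :: ratf where "uu = Fract [:0, 1:] 1"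

definition swp :: "nat \<Rightarrow> nat \<Rightarrow> nat" where
  "swp i j = (if j = i then Suc i else if j = Suc i then i else j)"

definition Eidem :: "nat \<Rightarrow> nat \<Rightarrow> (nat \<Rightarrow> 'a::field mat) \<Rightarrow> nat \<Rightarrow> 'a mat" where
  "Eidem d m T i = (inverse (of_nat d) :: 'a) \<cdot>\<^sub>m
      foldr (\<lambda>s A. T i ^\<^sub>m s * T (Suc i) ^\<^sub>m (d - s) + A) [0..<d] (0\<^sub>m m m)"

definition is_Yrep :: "nat \<Rightarrow> nat \<Rightarrow> 'a::field \<Rightarrow> nat \<Rightarrow> (nat \<Rightarrow> 'a mat) \<Rightarrow> (nat \<Rightarrow> 'a mat) \<Rightarrow> bool" where
  "is_Yrep d n u m G T \<longleftrightarrow>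
     (\<forall>i\<in>{1..<n}. G i \<in> carrier_mat m m) \<and> (\<forall>j\<in>{1..n}. T j \<in> carrier_mat m m) \<and>
     (\<forall>i\<in>{1..<n}. \<forall>j\<in>{1..<n}. (i > j + 1 \<or> j > i + 1) \<longrightarrow> G i * G j = G j * G i) \<and>
     (\<forall>i\<in>{1..n-2}. G i * G (Suc i) * G i = G (Suc i) * G i * G (Suc i)) \<and>
     (\<forall>i\<in>{1..n}. \<forall>j\<in>{1..n}. T i * T j = T j * T i) \<and>
     (\<forall>i\<in>{1..<n}. \<forall>j\<in>{1..n}. T j * G i = G i * T (swp i j)) \<and>
     (\<forall>j\<in>{1..n}. T j ^\<^sub>m d = 1\<^sub>m m) \<and>
     (\<forall>i\<in>{1..<n}. G i * G i = 1\<^sub>m m + (u - 1) \<cdot>\<^sub>m Eidem d m T i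
                      + (u - 1) \<cdot>\<^sub>m (Eidem d m T i * G i))"

definition irreducible_rep :: "nat \<Rightarrow> nat \<Rightarrow> (nat \<Rightarrow> 'a::field mat) \<Rightarrow> (nat \<Rightarrow> 'a mat) \<Rightarrow> bool" where
  "irreducible_rep n m G T \<longleftrightarrow> m > 0 \<and>
     (\<forall>W. W \<subseteq> carrier_vec m \<and> 0\<^sub>v m \<in> W \<and>
          (\<forall>v\<in>W. \<forall>w\<in>W. v + w \<in> W) \<and> (\<forall>c. \<forall>v\<in>W. c \<cdot>\<^sub>v v \<in> W) \<and>
          (\<forall>i\<in>{1..<n}. \<forall>v\<in>W. G i *\<^sub>v v \<in> W) \<and> (\<forall>j\<in>{1..n}. \<forall>v\<in>W. T j *\<^sub>v v \<in> W)
        \<longrightarrow> W = {0\<^sub>v m} \<or> W = carrier_vec m)"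

definition spec1 :: "ratf \<Rightarrow> complex \<Rightarrow> bool" where
  "spec1 f c \<longleftrightarrow> (\<exists>p q. poly q 1 \<noteq> 0 \<and> f = Fract p q \<and> c = poly p 1 / poly q 1)"

definition spec_mat :: "ratf mat \<Rightarrow> complex mat \<Rightarrow> bool" where
  "spec_mat A B \<longleftrightarrow> dim_row A = dim_row B \<and> dim_col A = dim_col B \<and>
     (\<forall>i<dim_row A. \<forall>j<dim_col A. spec1 (A $$ (i, j)) (B $$ (i, j)))"

definition iso_to_E :: "nat \<Rightarrow> nat \<Rightarrow> (nat \<Rightarrow> nat list) \<Rightarrow> nat \<Rightarrow> (nat \<Rightarrow> complex mat) \<Rightarrow> (nat \<Rightarrow> complex mat) \<Rightarrow> bool" where
  "iso_to_E d n lam m Gb Tb \<longleftrightarrow> (\<exists>\<phi>. bij_betw \<phi> (carrier_vec m) (Emod d n lam) \<and>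
     (\<forall>v\<in>carrier_vec m. \<forall>w\<in>carrier_vec m. \<phi> (v + w) = (\<lambda>x. \<phi> v x + \<phi> w x)) \<and>
     (\<forall>c. \<forall>v\<in>carrier_vec m. \<phi> (c \<cdot>\<^sub>v v) = (\<lambda>x. c * \<phi> v x)) \<and>
     (\<forall>i\<in>{1..<n}. \<forall>v\<in>carrier_vec m. \<phi> (Gb i *\<^sub>v v) = gact d n (gS i) (\<phi> v)) \<and>
     (\<forall>j\<in>{1..n}. \<forall>v\<in>carrier_vec m. \<phi> (Tb j *\<^sub>v v) = gact d n (gT d j) (\<phi> v)))"

text \<open>rho is the irreducible representation rho^lam of C(u)Y_{d,n}(u): it is irreducible and,
  in a suitable basis, its matrices are regular at u = 1 and specialise to E^lam.\<close>
definition is_rho :: "nat \<Rightarrow> nat \<Rightarrow> (nat \<Rightarrow> nat list) \<Rightarrow> nat \<Rightarrow> (nat \<Rightarrow> ratf mat) \<Rightarrow> (nat \<Rightarrow> ratf mat) \<Rightarrow> bool" where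
  "is_rho d n lam m G T \<longleftrightarrow> is_Yrep d n uu m G T \<and> irreducible_rep n m G T \<and>
     (\<exists>P Pi Gb Tb. P \<in> carrier_mat m m \<and> Pi \<in> carrier_mat m m \<and> P * Pi = 1\<^sub>m m \<and>
        (\<forall>i\<in>{1..<n}. spec_mat (Pi * G i * P) (Gb i)) \<and>
        (\<forall>j\<in>{1..n}. spec_mat (Pi * T j * P) (Tb j)) \<and>
        iso_to_E d n lam m Gb Tb)"

definition Xelt :: "nat \<Rightarrow> (nat \<Rightarrow> ratf mat) \<Rightarrow> ratf mat" where
  "Xelt m G = G 1 * G 2 * G 1 + G 1 * G 2 + G 2 * G 1 + G 1 + G 2 + 1\<^sub>m m"

end

theory Submission
  imports Defs "Jordan_Normal_Form.Determinant"
begin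

(*
  Let X = g1 g2 g1 + g1 g2 + g2 g1 + g1 + g2 + 1.  Choose the basis in which all matrices of
  rho^lam are regular at u = 1 and specialise to E^lam.  At u = 1 the quadratic relation reads
  g_i^2 = 1, so X specialises to the sum of the elements of <s_1, s_2> = S_3 acting on E^lam.
  That operator is 6 times the projection onto the S_3-invariants, hence it vanishes iff E^lam
  has no nonzero invariant vector, i.e. iff the trivial representation is not a direct summand
  (an invariant vector y splits off, with the kernel of an invariant functional that does not
  vanish on y as complement).

  It remains to see that X = 0 as soon as its specialisation is 0.  The quadratic relations give
  X^2 = L X with L congruent to 6 modulo u - 1, and from this every entry of X is divisible by
  every power of u - 1.
*)

lemma sq_mat_assoc_distrib:
  fixes A B C :: "'a :: semiring_1 mat"
  assumes "A \<in> carrier_mat n n" "B \<in> carrier_mat n n" "C \<in> carrier_mat n n"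
  shows "A * B * C = A * (B * C)" "A * (B + C) = A * B + A * C" "(A + B) * C = A * C + B * C"
    "A + B + C = A + (B + C)" "A + (B + C) = B + (A + C)"
  using assms by (auto simp: mult_add_distrib_mat add_mult_distrib_mat ac_simps intro!: eq_matI)

lemma sq_mat_mult_closed_add_commute:
  fixes A B :: "'a :: semiring_1 mat"
  assumes "A \<in> carrier_mat n n" "B \<in> carrier_mat n n"
  shows "A * B \<in> carrier_mat n n" "A + B = B + A"
  using assms by (auto simp: comm_add_mat)

lemma sq_mat_one_mult:
  fixes A :: "'a :: semiring_1 mat"
  assumes "A \<in> carrier_mat n n"
  shows "1\<^sub>m n * A = A" "A * 1\<^sub>m n = A"
  using assms by auto

lemmas sq_mat_simps = sq_mat_assoc_distrib sq_mat_mult_closed_add_commute sq_mat_one_mult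

lemma smult_smult_mat: "a \<cdot>\<^sub>m (b \<cdot>\<^sub>m A) = (a * b :: 'a :: semigroup_mult) \<cdot>\<^sub>m A"
  by (rule eq_matI) (auto simp: mult.assoc)

lemma smult_mat_cancel:
  fixes A B :: "'a :: field mat"
  assumes "a \<noteq> 0" and eq: "a \<cdot>\<^sub>m A = a \<cdot>\<^sub>m B"
  shows "A = B"
proof (rule eq_matI)
  show dims: "dim_row A = dim_row B" "dim_col A = dim_col B"
    using arg_cong[OF eq, of dim_row] arg_cong[OF eq, of dim_col] by simp_all
  fix i j assume "i < dim_row B" "j < dim_col B"
  then have "a * A $$ (i, j) = a * B $$ (i, j)"
    using arg_cong[OF eq, of "\<lambda>M. M $$ (i, j)"] dims by simp
  then show "A $$ (i, j) = B $$ (i, j)" using \<open>a \<noteq> 0\<close> by simp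
qed

lemma zero_smult_mat: "A \<in> carrier_mat r c \<Longrightarrow> (0 :: 'a :: semiring_0) \<cdot>\<^sub>m A = 0\<^sub>m r c"
  by (rule eq_matI) auto

lemma zero_smult_zero_vec: "0 \<cdot>\<^sub>v 0\<^sub>v n = (0\<^sub>v n :: 'a :: semiring_0 vec)"
  by (rule eq_vecI) auto

definition S3_sum :: "nat \<Rightarrow> 'a :: semiring_1 mat \<Rightarrow> 'a mat \<Rightarrow> 'a mat" where
  "S3_sum n g1 g2 = g1 * g2 * g1 + g1 * g2 + g2 * g1 + g1 + g2 + 1\<^sub>m n"

lemma Xelt_eq_S3_sum: "Xelt m G = S3_sum m (G 1) (G 2)"
  by (simp add: Xelt_def S3_sum_def)

lemma S3_sum_carrier:
  "g1 \<in> carrier_mat n n \<Longrightarrow> g2 \<in> carrier_mat n n \<Longrightarrow> S3_sum n g1 g2 \<in> carrier_mat n n"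
  unfolding S3_sum_def by (simp add: sq_mat_simps)

lemma S3_sum_factorisations:
  fixes g1 g2 :: "'a :: semiring_1 mat"
  assumes "g1 \<in> carrier_mat n n" "g2 \<in> carrier_mat n n"
  shows "S3_sum n g1 g2 = (1\<^sub>m n + g1) * (1\<^sub>m n + g2 + g2 * g1)"
    and "g1 * g2 * g1 = g2 * g1 * g2 \<Longrightarrow> S3_sum n g1 g2 = (1\<^sub>m n + g2) * (1\<^sub>m n + g1 + g1 * g2)"
  using assms unfolding S3_sum_def by (simp_all add: sq_mat_simps[where n = n])

lemma S3_sum_left_mult:
  fixes g1 g2 k1 k2 :: "'a :: semiring_1 mat"
  assumes [simp]: "g1 \<in> carrier_mat n n" "g2 \<in> carrier_mat n n"
      "k1 \<in> carrier_mat n n" "k2 \<in> carrier_mat n n"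
    and quad1: "g1 * g1 = 1\<^sub>m n + k1 + k1 * g1" and quad2: "g2 * g2 = 1\<^sub>m n + k2 + k2 * g2"
    and braid: "g1 * g2 * g1 = g2 * g1 * g2"
  shows "g1 * S3_sum n g1 g2 = (1\<^sub>m n + k1) * S3_sum n g1 g2"
    and "g2 * S3_sum n g1 g2 = (1\<^sub>m n + k2) * S3_sum n g1 g2"
proof -
  note ms = sq_mat_simps[where n = n]
  define Y Z where "Y = 1\<^sub>m n + g2 + g2 * g1" and "Z = 1\<^sub>m n + g1 + g1 * g2"
  have [simp]: "Y \<in> carrier_mat n n" "Z \<in> carrier_mat n n"
    unfolding Y_def Z_def by (simp_all add: ms)
  have X_Y: "S3_sum n g1 g2 = (1\<^sub>m n + g1) * Y"
    unfolding Y_def by (rule S3_sum_factorisations(1)) simp_all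
  have X_Z: "S3_sum n g1 g2 = (1\<^sub>m n + g2) * Z"
    unfolding Z_def by (rule S3_sum_factorisations(2)) (simp_all add: braid)
  have "g1 * S3_sum n g1 g2 = (g1 * (1\<^sub>m n + g1)) * Y" unfolding X_Y by (simp add: ms)
  also have "g1 * (1\<^sub>m n + g1) = (1\<^sub>m n + k1) * (1\<^sub>m n + g1)" by (simp add: ms quad1)
  finally show "g1 * S3_sum n g1 g2 = (1\<^sub>m n + k1) * S3_sum n g1 g2"
    unfolding X_Y by (simp add: ms)
  have "g2 * S3_sum n g1 g2 = (g2 * (1\<^sub>m n + g2)) * Z" unfolding X_Z by (simp add: ms)
  also have "g2 * (1\<^sub>m n + g2) = (1\<^sub>m n + k2) * (1\<^sub>m n + g2)" by (simp add: ms quad2)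
  finally show "g2 * S3_sum n g1 g2 = (1\<^sub>m n + k2) * S3_sum n g1 g2"
    unfolding X_Z by (simp add: ms)
qed

text \<open>Expand X X = (1 + g1)(1 + g2 + g2 g1) X and move the g_i to the right, where they act on X
  as 1 + k_i; moving g_i past k_j permutes the k_j.\<close>

lemma S3_sum_square:
  fixes g1 g2 k1 k2 k3 :: "'a :: comm_ring_1 mat"
  assumes [simp]: "g1 \<in> carrier_mat n n" "g2 \<in> carrier_mat n n"
      "k1 \<in> carrier_mat n n" "k2 \<in> carrier_mat n n" "k3 \<in> carrier_mat n n"
    and quad1: "g1 * g1 = 1\<^sub>m n + k1 + k1 * g1" and quad2: "g2 * g2 = 1\<^sub>m n + k2 + k2 * g2"
    and braid: "g1 * g2 * g1 = g2 * g1 * g2"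
    and g2_k1: "g2 * k1 = k3 * g2" and g1_k2: "g1 * k2 = k3 * g1" and g1_k3: "g1 * k3 = k2 * g1"
  defines "f1 \<equiv> 1\<^sub>m n + k1" and "f2 \<equiv> 1\<^sub>m n + k2" and "f3 \<equiv> 1\<^sub>m n + k3"
  shows "S3_sum n g1 g2 * S3_sum n g1 g2
    = (1\<^sub>m n + f2 + f3 * f2 + f1 + f3 * f1 + f2 * f3 * f1) * S3_sum n g1 g2"
proof -
  note ms = sq_mat_simps[where n = n]
  define X M N where "X = S3_sum n g1 g2" and "M = 1\<^sub>m n + f2 + f3 * f2"
    and "N = 1\<^sub>m n + f3 + f2 * f3"
  have [simp]: "X \<in> carrier_mat n n" "f1 \<in> carrier_mat n n" "f2 \<in> carrier_mat n n"
    "f3 \<in> carrier_mat n n" "M \<in> carrier_mat n n" "N \<in> carrier_mat n n"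
    unfolding X_def f1_def f2_def f3_def M_def N_def by (simp_all add: S3_sum_carrier ms)
  note g_X = S3_sum_left_mult[OF assms(1-4) quad1 quad2 braid, folded X_def f1_def f2_def]
  have "(1\<^sub>m n + g2 + g2 * g1) * X = X + g2 * X + g2 * (g1 * X)" by (simp add: ms)
  also have "\<dots> = X + f2 * X + (g2 * f1) * X" unfolding g_X by (simp add: ms)
  also have "g2 * f1 = f3 * g2" unfolding f1_def f3_def by (simp add: ms g2_k1)
  also have "X + f2 * X + (f3 * g2) * X = M * X" unfolding M_def by (simp add: ms g_X)
  finally have Y_X: "(1\<^sub>m n + g2 + g2 * g1) * X = M * X" .
  have g1_M: "g1 * M = N * g1"
  proof -
    have "g1 * (k2 * A) = k3 * (g1 * A)" "g1 * (k3 * A) = k2 * (g1 * A)"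
      if "A \<in> carrier_mat n n" for A
      using that by (simp_all add: g1_k2 g1_k3 flip: ms(1))
    then show ?thesis unfolding M_def N_def f2_def f3_def by (simp add: ms g1_k2 g1_k3)
  qed
  have "X * X = (1\<^sub>m n + g1) * ((1\<^sub>m n + g2 + g2 * g1) * X)"
    by (subst (1) X_def, subst S3_sum_factorisations(1)) (simp_all add: ms)
  also have "\<dots> = M * X + N * (g1 * X)" unfolding Y_X by (simp add: ms g1_M flip: ms(1))
  also have "\<dots> = (M + N * f1) * X" by (simp add: ms g_X)
  also have "M + N * f1 = 1\<^sub>m n + f2 + f3 * f2 + f1 + f3 * f1 + f2 * f3 * f1"
    unfolding M_def N_def by (simp add: ms)
  finally show ?thesis unfolding X_def .
qed

lemma S3_sum_absorb:
  fixes g1 g2 :: "'a :: semiring_1 mat"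
  assumes [simp]: "g1 \<in> carrier_mat n n" "g2 \<in> carrier_mat n n"
    and inv1: "g1 * g1 = 1\<^sub>m n" and inv2: "g2 * g2 = 1\<^sub>m n"
    and braid: "g1 * g2 * g1 = g2 * g1 * g2"
  shows "g1 * S3_sum n g1 g2 = S3_sum n g1 g2" "g2 * S3_sum n g1 g2 = S3_sum n g1 g2"
    "S3_sum n g1 g2 * g1 = S3_sum n g1 g2" "S3_sum n g1 g2 * g2 = S3_sum n g1 g2"
proof -
  note ms = sq_mat_simps[where n = n]
  have cancel: "g1 * (g1 * A) = A" "g2 * (g2 * A) = A" "g2 * (g1 * (g2 * A)) = g1 * (g2 * (g1 * A))"
    if "A \<in> carrier_mat n n" for A
    using that arg_cong[OF inv1, of "\<lambda>B. B * A"] arg_cong[OF inv2, of "\<lambda>B. B * A"]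
      arg_cong[OF braid, of "\<lambda>B. B * A"]
    by (simp_all add: ms)
  have braid': "g2 * (g1 * g2) = g1 * (g2 * g1)"
    using braid by (simp add: ms)
  note rules = ms cancel inv1 inv2 braid'
  show "g1 * S3_sum n g1 g2 = S3_sum n g1 g2" "g2 * S3_sum n g1 g2 = S3_sum n g1 g2"
    "S3_sum n g1 g2 * g1 = S3_sum n g1 g2" "S3_sum n g1 g2 * g2 = S3_sum n g1 g2"
    unfolding S3_sum_def by (simp_all add: rules)
qed

lemma S3_sum_fixed_vec:
  fixes g1 g2 :: "'a :: semiring_1 mat"
  assumes "g1 \<in> carrier_mat n n" "g2 \<in> carrier_mat n n" "y \<in> carrier_vec n"
    and "g1 *\<^sub>v y = y" "g2 *\<^sub>v y = y"
  shows "S3_sum n g1 g2 *\<^sub>v y = 6 \<cdot>\<^sub>v y"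
proof -
  have mult_vec: "(A * B) *\<^sub>v v = A *\<^sub>v (B *\<^sub>v v)"
    if "A \<in> carrier_mat n n" "B \<in> carrier_mat n n" "v \<in> carrier_vec n" for A B :: "'a mat" and v
    using that by auto
  have "S3_sum n g1 g2 *\<^sub>v y = y + y + y + y + y + y"
    unfolding S3_sum_def using assms
    by (simp add: add_mult_distrib_mat_vec[of _ n n] mult_vec sq_mat_mult_closed_add_commute del: assoc_mult_mat)
  moreover have "x + (x + (x + (x + (x + x)))) = 6 * x" for x :: 'a
  proof -
    have "(6::'a) = 1 + 1 + 1 + 1 + 1 + 1" by simp
    then show ?thesis by (simp only: distrib_right mult_1_left add.assoc)
  qed
  ultimately show ?thesis
    using assms(3) by (auto intro!: eq_vecI)
qed

section \<open>Specialisation at u = 1\<close>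

lemma spec1_Fract: "poly q 1 \<noteq> 0 \<Longrightarrow> spec1 (Fract p q) (poly p 1 / poly q 1)"
  unfolding spec1_def by blast

lemma spec1_unique: "spec1 f a \<Longrightarrow> spec1 f b \<Longrightarrow> a = b"
proof (unfold spec1_def, elim exE conjE)
  fix p q p' q'
  assume "poly q 1 \<noteq> 0" "f = Fract p q" "a = poly p 1 / poly q 1"
    and "poly q' 1 \<noteq> 0" "f = Fract p' q'" "b = poly p' 1 / poly q' 1"
  moreover from this have "p * q' = p' * q"
    by (metis eq_fract(1) poly_0)
  then have "poly p 1 * poly q' 1 = poly p' 1 * poly q 1"
    by (metis poly_mult)
  ultimately show "a = b" by (simp add: frac_eq_eq)
qed

lemma spec1_add: "spec1 f a \<Longrightarrow> spec1 g b \<Longrightarrow> spec1 (f + g) (a + b)"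
proof (unfold spec1_def, elim exE conjE)
  fix p q p' q'
  assume f: "poly q 1 \<noteq> 0" "f = Fract p q" "a = poly p 1 / poly q 1"
    and g: "poly q' 1 \<noteq> 0" "g = Fract p' q'" "b = poly p' 1 / poly q' 1"
  have nz: "q \<noteq> 0" "q' \<noteq> 0" using f(1) g(1) by auto
  show "\<exists>p q. poly q 1 \<noteq> 0 \<and> f + g = Fract p q \<and> a + b = poly p 1 / poly q 1"
    by (rule exI[of _ "p * q' + p' * q"], rule exI[of _ "q * q'"])
      (use f g nz in \<open>auto simp: add_frac_eq mult.commute\<close>)
qed

lemma spec1_mult: "spec1 f a \<Longrightarrow> spec1 g b \<Longrightarrow> spec1 (f * g) (a * b)"
proof (unfold spec1_def, elim exE conjE)
  fix p q p' q'
  assume f: "poly q 1 \<noteq> 0" "f = Fract p q" "a = poly p 1 / poly q 1"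
    and g: "poly q' 1 \<noteq> 0" "g = Fract p' q'" "b = poly p' 1 / poly q' 1"
  show "\<exists>p q. poly q 1 \<noteq> 0 \<and> f * g = Fract p q \<and> a * b = poly p 1 / poly q 1"
    by (rule exI[of _ "p * p'"], rule exI[of _ "q * q'"]) (use f g in auto)
qed

lemma spec1_0: "spec1 0 0"
  using spec1_Fract[of 1 0] by (simp add: Zero_fract_def)

lemma spec1_1: "spec1 1 1"
  using spec1_Fract[of 1 1] by (simp add: One_fract_def)

lemma spec1_sum: "(\<And>i. i \<in> S \<Longrightarrow> spec1 (f i) (a i)) \<Longrightarrow> spec1 (\<Sum>i\<in>S. f i) (\<Sum>i\<in>S. a i)"
  by (induct S rule: infinite_finite_induct) (auto intro: spec1_add spec1_0)

lemma spec1_power: "spec1 f a \<Longrightarrow> spec1 (f ^ k) (a ^ k)"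
  by (induct k) (auto intro: spec1_mult spec1_1)

lemma spec1_inverse_of_nat: "spec1 (inverse (of_nat k)) (inverse (of_nat k))"
proof (cases "k = 0")
  case False
  then show ?thesis
    using spec1_Fract[of "of_nat k" 1]
    by (simp add: of_nat_fract of_nat_poly One_fract_def inverse_eq_divide)
qed (simp add: spec1_0)

lemma u_minus_1_power: "(uu - 1) ^ k = Fract ([:-1, 1:] ^ k) 1"
  by (induct k) (simp_all add: uu_def One_fract_def one_pCons mult.commute)

lemma u_minus_1_nonzero: "uu - 1 \<noteq> 0"
  using u_minus_1_power[of 1] by (simp add: Zero_fract_def eq_fract)

lemma spec1_u_minus_1: "spec1 (uu - 1) 0"
  using spec1_Fract[of 1 "[:-1, 1:]"] u_minus_1_power[of 1] by simp

lemma spec1_0_factor: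
  assumes "spec1 f 0"
  obtains g c where "spec1 g c" and "f = (uu - 1) * g"
proof -
  from assms obtain p q where q: "poly q 1 \<noteq> 0" and f: "f = Fract p q" and "poly p 1 = 0"
    unfolding spec1_def by auto
  then obtain r where r: "p = [:-1, 1:] * r"
    by (metis dvdE poly_eq_0_iff_dvd)
  have "f = (uu - 1) * Fract r q"
    using q u_minus_1_power[of 1] by (simp add: f r)
  with spec1_Fract[OF q] show ?thesis by (rule that)
qed

lemma eq_0_if_divisible_by_all_powers:
  assumes "\<And>k. \<exists>g c. spec1 g c \<and> f = (uu - 1) ^ k * g"
  shows "f = 0"
proof (rule ccontr)
  assume "f \<noteq> 0"
  obtain p q where f: "f = Fract p q" and q: "q \<noteq> 0" by (cases f) auto
  with \<open>f \<noteq> 0\<close> have p: "p \<noteq> 0" by (auto simp: Zero_fract_def eq_fract)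
  define k where "k = Suc (order 1 p)"
  from assms[of k] obtain p' q' where q': "poly q' 1 \<noteq> 0" and "f = (uu - 1) ^ k * Fract p' q'"
    unfolding spec1_def by auto
  moreover have q'_nz: "q' \<noteq> 0" using q' by auto
  ultimately have "p * q' = [:-1, 1:] ^ k * p' * q"
    using q by (simp add: f u_minus_1_power eq_fract)
  then have "[:-1, 1:] ^ k dvd p * q'" by (metis dvd_triv_left mult.assoc)
  with q'_nz have "k \<le> order 1 p + order 1 q'"
    using p order_divides[of 1 k "p * q'"] by (simp add: order_mult)
  moreover have "order 1 q' = 0" using q' by (simp add: order_0I)
  ultimately show False unfolding k_def by simp
qed

lemma spec_mat_unique: "spec_mat A B \<Longrightarrow> spec_mat A C \<Longrightarrow> B = C"
  unfolding spec_mat_def by (auto intro!: eq_matI spec1_unique)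

lemma spec_mat_carrier: "spec_mat A B \<Longrightarrow> A \<in> carrier_mat r c \<Longrightarrow> B \<in> carrier_mat r c"
  unfolding spec_mat_def carrier_mat_def by auto

lemma spec_mat_add:
  "spec_mat A B \<Longrightarrow> spec_mat A' B' \<Longrightarrow> A \<in> carrier_mat r c \<Longrightarrow> A' \<in> carrier_mat r c
    \<Longrightarrow> spec_mat (A + A') (B + B')"
  unfolding spec_mat_def by (auto intro!: spec1_add)

lemma spec_mat_mult:
  assumes "spec_mat A B" "spec_mat A' B'" "A \<in> carrier_mat r k" "A' \<in> carrier_mat k c"
  shows "spec_mat (A * A') (B * B')"
proof -
  have "B \<in> carrier_mat r k" "B' \<in> carrier_mat k c"
    using assms spec_mat_carrier by blast+
  with assms show ?thesis
    unfolding spec_mat_def by (auto simp: scalar_prod_def intro!: spec1_sum spec1_mult)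
qed

lemma spec_mat_smult: "spec1 a b \<Longrightarrow> spec_mat A B \<Longrightarrow> spec_mat (a \<cdot>\<^sub>m A) (b \<cdot>\<^sub>m B)"
  unfolding spec_mat_def by (auto intro!: spec1_mult)

lemma spec_mat_one: "spec_mat (1\<^sub>m n) (1\<^sub>m n)"
  unfolding spec_mat_def by (auto intro: spec1_1 spec1_0)

lemma spec_mat_zero: "spec_mat (0\<^sub>m r c) (0\<^sub>m r c)"
  unfolding spec_mat_def by (auto intro: spec1_0)

lemma spec_mat_smult_u_minus_1:
  assumes "spec_mat A B" "A \<in> carrier_mat r c"
  shows "spec_mat ((uu - 1) \<cdot>\<^sub>m A) (0\<^sub>m r c)"
proof -
  have "B \<in> carrier_mat r c" using assms by (rule spec_mat_carrier)
  then show ?thesis using spec_mat_smult[OF spec1_u_minus_1 assms(1)] by (simp add: zero_smult_mat)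
qed

lemma spec_mat_pow:
  assumes "spec_mat A B" "A \<in> carrier_mat m m"
  shows "spec_mat (A ^\<^sub>m k) (B ^\<^sub>m k)"
proof -
  have "B \<in> carrier_mat m m" using assms by (rule spec_mat_carrier)
  with assms show ?thesis by (induct k) (auto intro: spec_mat_mult spec_mat_one)
qed

lemma spec_mat_0_factor:
  assumes "spec_mat A (0\<^sub>m r c)"
  obtains A' B' where "spec_mat A' B'" and "A = (uu - 1) \<cdot>\<^sub>m A'"
proof -
  have "\<exists>g b. spec1 g b \<and> A $$ (i, j) = (uu - 1) * g"
    if "i < dim_row A" "j < dim_col A" for i j
  proof -
    have "spec1 (A $$ (i, j)) 0" using assms that unfolding spec_mat_def by auto
    then show ?thesis by (blast elim: spec1_0_factor)
  qed
  then obtain g b where gb: "\<And>i j. i < dim_row A \<Longrightarrow> j < dim_col A \<Longrightarrow>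
      spec1 (g i j) (b i j) \<and> A $$ (i, j) = (uu - 1) * g i j"
    by metis
  show ?thesis
    by (rule that[of "mat (dim_row A) (dim_col A) (\<lambda>(i, j). g i j)"
          "mat (dim_row A) (dim_col A) (\<lambda>(i, j). b i j)"])
      (auto simp: spec_mat_def gb intro!: eq_matI)
qed

text \<open>By induction on k, A = (u - 1)^k A' with A' regular at 1 and specialising to 0.  For the
  step write A' = (u - 1) A''; cancelling c = (u - 1)^(k+1) in A^2 = L A gives c A''^2 = L A'', and
  at u = 1 this says Lb B'' = 0 for the specialisation B'' of A'', so B'' = 0.\<close>

lemma spec_0_quasi_idempotent_eq_0:
  fixes A L :: "ratf mat"
  assumes A: "A \<in> carrier_mat m m" and L: "L \<in> carrier_mat m m"
    and spec_A: "spec_mat A (0\<^sub>m m m)" and spec_L: "spec_mat L Lb"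
    and Lb_cancel: "\<And>B. B \<in> carrier_mat m m \<Longrightarrow> Lb * B = 0\<^sub>m m m \<Longrightarrow> B = 0\<^sub>m m m"
    and AA: "A * A = L * A"
  shows "A = 0\<^sub>m m m"
proof -
  have "\<exists>A'. spec_mat A' (0\<^sub>m m m) \<and> A = (uu - 1) ^ k \<cdot>\<^sub>m A'" for k
  proof (induct k)
    case 0
    show ?case using spec_A by (intro exI[of _ A]) (auto intro!: eq_matI)
  next
    case (Suc k)
    then obtain A' where spec_A': "spec_mat A' (0\<^sub>m m m)" and A_A': "A = (uu - 1) ^ k \<cdot>\<^sub>m A'"
      by blast
    from spec_A' obtain A'' B'' where spec_A'': "spec_mat A'' B''" and A'_A'': "A' = (uu - 1) \<cdot>\<^sub>m A''"
      by (rule spec_mat_0_factor)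
    define c where "c = (uu - 1) ^ Suc k"
    have A_A'': "A = c \<cdot>\<^sub>m A''"
      unfolding c_def A_A' A'_A'' by (simp add: smult_smult_mat mult.commute)
    have A'': "A'' \<in> carrier_mat m m" using A unfolding A_A'' carrier_mat_def by simp
    have B'': "B'' \<in> carrier_mat m m" using spec_mat_carrier[OF spec_A'' A''] .
    have "c \<cdot>\<^sub>m (c \<cdot>\<^sub>m (A'' * A'')) = c \<cdot>\<^sub>m (L * A'')"
      using AA mult_smult_assoc_mat[OF A'' smult_carrier_mat[OF A'']]
        mult_smult_distrib[OF A'' A''] mult_smult_distrib[OF L A'']
      unfolding A_A'' by simp
    moreover have "c \<noteq> 0"
      unfolding c_def using u_minus_1_nonzero by simp
    ultimately have cancelled: "c \<cdot>\<^sub>m (A'' * A'') = L * A''"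
      using smult_mat_cancel by blast
    have "spec_mat (c \<cdot>\<^sub>m (A'' * A'')) (0 \<cdot>\<^sub>m (B'' * B''))"
      using spec1_power[OF spec1_u_minus_1, of "Suc k"] A''
      by (auto simp: c_def intro!: spec_mat_smult spec_mat_mult spec_A'')
    moreover have "spec_mat (L * A'') (Lb * B'')"
      using spec_L spec_A'' L A'' by (rule spec_mat_mult)
    ultimately have "Lb * B'' = 0 \<cdot>\<^sub>m (B'' * B'')"
      unfolding cancelled by (rule spec_mat_unique[symmetric])
    also have "0 \<cdot>\<^sub>m (B'' * B'') = 0\<^sub>m m m"
      using B'' by (simp add: zero_smult_mat)
    finally have "B'' = 0\<^sub>m m m"
      using B'' Lb_cancel by blast
    then show ?case using spec_A'' A_A'' by (auto simp: c_def)
  qed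
  then have "A $$ (i, j) = 0" if "i < m" "j < m" for i j
    using that A by (intro eq_0_if_divisible_by_all_powers) (fastforce simp: spec_mat_def)
  with A show ?thesis by (auto intro!: eq_matI)
qed

definition mat_sum :: "nat \<Rightarrow> ('b \<Rightarrow> 'a :: semiring_0 mat) \<Rightarrow> 'b list \<Rightarrow> 'a mat" where
  "mat_sum m f xs = foldr (\<lambda>s M. f s + M) xs (0\<^sub>m m m)"

lemma mat_sum_simps [simp]:
  "mat_sum m f [] = 0\<^sub>m m m" "mat_sum m f (x # xs) = f x + mat_sum m f xs"
  by (simp_all add: mat_sum_def)

lemma mat_sum_carrier: "(\<And>s. f s \<in> carrier_mat m m) \<Longrightarrow> mat_sum m f xs \<in> carrier_mat m m"
  by (induct xs) auto

lemma mult_mat_sum: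
  assumes G: "G \<in> carrier_mat m m" and f: "\<And>s. f s \<in> carrier_mat m m"
  shows "G * mat_sum m f xs = mat_sum m (\<lambda>s. G * f s) xs"
proof (induct xs)
  case (Cons x xs)
  have "mat_sum m f xs \<in> carrier_mat m m" using f by (rule mat_sum_carrier)
  with Cons show ?case by (simp add: mult_add_distrib_mat[OF G f[of x]])
qed (use G in simp)

lemma mat_sum_mult:
  assumes G: "G \<in> carrier_mat m m" and f: "\<And>s. f s \<in> carrier_mat m m"
  shows "mat_sum m f xs * G = mat_sum m (\<lambda>s. f s * G) xs"
proof (induct xs)
  case (Cons x xs)
  have "mat_sum m f xs \<in> carrier_mat m m" using f by (rule mat_sum_carrier)
  with Cons show ?case by (simp add: add_mult_distrib_mat[OF f[of x] _ G])
qed (use G in simp)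

lemma spec_mat_mat_sum:
  assumes "\<And>s. spec_mat (f s) (g s)" and "\<And>s. f s \<in> carrier_mat m m"
  shows "spec_mat (mat_sum m f xs) (mat_sum m g xs)"
  by (induct xs) (auto intro!: spec_mat_add spec_mat_zero mat_sum_carrier assms)

text \<open>The e_i of the quadratic relation, built from an arbitrary pair A = T i, B = T (i + 1);
  the pair (T 1, T 3) arises when g_1 and g_2 conjugate e_1 and e_2 into each other.\<close>

definition Eidem_of :: "nat \<Rightarrow> nat \<Rightarrow> 'a :: field mat \<Rightarrow> 'a mat \<Rightarrow> 'a mat" where
  "Eidem_of d m A B = inverse (of_nat d) \<cdot>\<^sub>m mat_sum m (\<lambda>s. A ^\<^sub>m s * B ^\<^sub>m (d - s)) [0..<d]"

lemma Eidem_eq_Eidem_of: "Eidem d m T i = Eidem_of d m (T i) (T (Suc i))"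
  by (simp add: Eidem_def Eidem_of_def mat_sum_def)

lemma Eidem_of_carrier:
  "A \<in> carrier_mat m m \<Longrightarrow> B \<in> carrier_mat m m \<Longrightarrow> Eidem_of d m A B \<in> carrier_mat m m"
  unfolding Eidem_of_def by (intro smult_carrier_mat mat_sum_carrier) (simp add: sq_mat_mult_closed_add_commute)

lemma pow_mat_commute:
  assumes G: "G \<in> carrier_mat m m" and A: "A \<in> carrier_mat m m" and A': "A' \<in> carrier_mat m m"
    and comm: "G * A = A' * G"
  shows "G * A ^\<^sub>m k = A' ^\<^sub>m k * G"
proof (induct k)
  case (Suc k)
  note ms = sq_mat_simps[where n = m]
  have "G * A ^\<^sub>m Suc k = (G * A ^\<^sub>m k) * A" using G A by (simp add: ms)
  also have "\<dots> = A' ^\<^sub>m k * (G * A)" unfolding Suc using G A A' by (simp add: ms)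
  also have "\<dots> = A' ^\<^sub>m Suc k * G" unfolding comm using G A' by (simp add: ms)
  finally show ?case .
qed (use G A A' in simp)

lemma Eidem_of_commute:
  assumes G: "G \<in> carrier_mat m m"
    and A: "A \<in> carrier_mat m m" "A' \<in> carrier_mat m m" "G * A = A' * G"
    and B: "B \<in> carrier_mat m m" "B' \<in> carrier_mat m m" "G * B = B' * G"
  shows "G * Eidem_of d m A B = Eidem_of d m A' B' * G"
proof -
  note ms = sq_mat_simps[where n = m]
  have "G * (A ^\<^sub>m s * B ^\<^sub>m (d - s)) = (A' ^\<^sub>m s * B' ^\<^sub>m (d - s)) * G" for s
  proof -
    have "G * (A ^\<^sub>m s * B ^\<^sub>m (d - s)) = (G * A ^\<^sub>m s) * B ^\<^sub>m (d - s)"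
      using G A B by (simp add: ms)
    also have "\<dots> = A' ^\<^sub>m s * (G * B ^\<^sub>m (d - s))"
      unfolding pow_mat_commute[OF G A] using G A B by (simp add: ms)
    also have "\<dots> = (A' ^\<^sub>m s * B' ^\<^sub>m (d - s)) * G"
      unfolding pow_mat_commute[OF G B] using G A B by (simp add: ms)
    finally show ?thesis .
  qed
  moreover define S S' where "S = mat_sum m (\<lambda>s. A ^\<^sub>m s * B ^\<^sub>m (d - s)) [0..<d]"
    and "S' = mat_sum m (\<lambda>s. A' ^\<^sub>m s * B' ^\<^sub>m (d - s)) [0..<d]"
  moreover have S: "S \<in> carrier_mat m m" "S' \<in> carrier_mat m m"
    unfolding S_def S'_def using A B by (simp_all add: mat_sum_carrier ms)
  ultimately have "G * S = S' * G"
    using G A B by (simp add: mult_mat_sum mat_sum_mult ms)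
  then show ?thesis
    unfolding Eidem_of_def S_def[symmetric] S'_def[symmetric]
    using mult_smult_distrib[OF G S(1)] mult_smult_assoc_mat[OF S(2) G] by simp
qed

lemma spec_mat_Eidem_of:
  assumes "spec_mat A Ab" "spec_mat B Bb" "A \<in> carrier_mat m m" "B \<in> carrier_mat m m"
  shows "spec_mat (Eidem_of d m A B) (Eidem_of d m Ab Bb)"
  unfolding Eidem_of_def using assms
  by (intro spec_mat_smult spec1_inverse_of_nat spec_mat_mat_sum spec_mat_mult spec_mat_pow)
    (auto simp: sq_mat_mult_closed_add_commute)

lemma is_YrepD:
  assumes "is_Yrep d n u m G T"
  shows "\<And>i. i \<in> {1..<n} \<Longrightarrow> G i \<in> carrier_mat m m"
    and "\<And>j. j \<in> {1..n} \<Longrightarrow> T j \<in> carrier_mat m m"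
    and "\<And>i j. i \<in> {1..<n} \<Longrightarrow> j \<in> {1..<n} \<Longrightarrow> i > j + 1 \<or> j > i + 1
      \<Longrightarrow> G i * G j = G j * G i"
    and "\<And>i. i \<in> {1..n-2} \<Longrightarrow> G i * G (Suc i) * G i = G (Suc i) * G i * G (Suc i)"
    and "\<And>i j. i \<in> {1..n} \<Longrightarrow> j \<in> {1..n} \<Longrightarrow> T i * T j = T j * T i"
    and "\<And>i j. i \<in> {1..<n} \<Longrightarrow> j \<in> {1..n} \<Longrightarrow> T j * G i = G i * T (swp i j)"
    and "\<And>j. j \<in> {1..n} \<Longrightarrow> T j ^\<^sub>m d = 1\<^sub>m m"
    and "\<And>i. i \<in> {1..<n} \<Longrightarrow> G i * G i = 1\<^sub>m m + (u - 1) \<cdot>\<^sub>m Eidem d m T i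
      + (u - 1) \<cdot>\<^sub>m (Eidem d m T i * G i)"
  using assms unfolding is_Yrep_def by blast+

lemma swp_range: "i \<in> {1..<n} \<Longrightarrow> j \<in> {1..n} \<Longrightarrow> swp i j \<in> {1..n}"
  by (auto simp: swp_def)

section \<open>Change of basis\<close>

definition conj_mat :: "'a :: semiring_0 mat \<Rightarrow> 'a mat \<Rightarrow> 'a mat \<Rightarrow> 'a mat" where
  "conj_mat Q P A = Q * A * P"

context
  fixes P Q :: "'a :: field mat" and m :: nat
  assumes P: "P \<in> carrier_mat m m" and Q: "Q \<in> carrier_mat m m" and inverse: "P * Q = 1\<^sub>m m"
begin

lemma conj_mat_carrier: "A \<in> carrier_mat m m \<Longrightarrow> conj_mat Q P A \<in> carrier_mat m m"
  unfolding conj_mat_def using P Q by simp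

lemma conj_mat_mult:
  assumes "A \<in> carrier_mat m m" "B \<in> carrier_mat m m"
  shows "conj_mat Q P (A * B) = conj_mat Q P A * conj_mat Q P B"
proof -
  have "P * (Q * C) = C" if "C \<in> carrier_mat m m" for C
    using that P Q by (simp add: inverse flip: assoc_mult_mat[of P m m Q m C])
  then show ?thesis
    using assms P Q unfolding conj_mat_def by (simp add: sq_mat_simps[where n = m])
qed

lemma conj_mat_one: "conj_mat Q P (1\<^sub>m m) = 1\<^sub>m m"
  using P Q mat_mult_left_right_inverse[OF P Q inverse] unfolding conj_mat_def by simp

lemma conj_mat_add:
  "A \<in> carrier_mat m m \<Longrightarrow> B \<in> carrier_mat m m
    \<Longrightarrow> conj_mat Q P (A + B) = conj_mat Q P A + conj_mat Q P B"
  using P Q unfolding conj_mat_def by (simp add: sq_mat_simps[where n = m])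

lemma conj_mat_smult: "A \<in> carrier_mat m m \<Longrightarrow> conj_mat Q P (c \<cdot>\<^sub>m A) = c \<cdot>\<^sub>m conj_mat Q P A"
  using P Q unfolding conj_mat_def by (simp add: mult_smult_distrib mult_smult_assoc_mat[of _ m m])

lemma conj_mat_pow: "A \<in> carrier_mat m m \<Longrightarrow> conj_mat Q P (A ^\<^sub>m k) = conj_mat Q P A ^\<^sub>m k"
  by (induct k) (simp_all add: conj_mat_one conj_mat_mult conj_mat_carrier
      conj_mat_carrier[THEN carrier_matD(1)])

lemma conj_mat_Eidem_of:
  assumes A: "A \<in> carrier_mat m m" and B: "B \<in> carrier_mat m m"
  shows "conj_mat Q P (Eidem_of d m A B) = Eidem_of d m (conj_mat Q P A) (conj_mat Q P B)"
proof -
  have intertwine: "Q * C = conj_mat Q P C * Q" if "C \<in> carrier_mat m m" for C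
  proof -
    have "conj_mat Q P C * Q = Q * C * (P * Q)"
      unfolding conj_mat_def using that P Q by (simp add: sq_mat_simps[where n = m])
    then show ?thesis using that Q by (simp add: inverse)
  qed
  define E' where "E' = Eidem_of d m (conj_mat Q P A) (conj_mat Q P B)"
  have E': "E' \<in> carrier_mat m m" unfolding E'_def using A B by (simp add: Eidem_of_carrier conj_mat_carrier)
  have "Q * Eidem_of d m A B = E' * Q"
    unfolding E'_def using A B by (intro Eidem_of_commute Q intertwine conj_mat_carrier)
  then have "conj_mat Q P (Eidem_of d m A B) = E' * Q * P"
    unfolding conj_mat_def[of Q P "Eidem_of d m A B"] by simp
  also have "\<dots> = E'"
    using E' P Q mat_mult_left_right_inverse[OF P Q inverse] by simp
  finally show ?thesis unfolding E'_def .
qed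

lemma conj_mat_quadratic_relation:
  assumes g: "g \<in> carrier_mat m m" and e: "e \<in> carrier_mat m m"
    and quad: "g * g = 1\<^sub>m m + c \<cdot>\<^sub>m e + c \<cdot>\<^sub>m (e * g)"
  shows "conj_mat Q P g * conj_mat Q P g
    = 1\<^sub>m m + c \<cdot>\<^sub>m conj_mat Q P e + c \<cdot>\<^sub>m (conj_mat Q P e * conj_mat Q P g)"
proof -
  have "conj_mat Q P g * conj_mat Q P g = conj_mat Q P (1\<^sub>m m + c \<cdot>\<^sub>m e + c \<cdot>\<^sub>m (e * g))"
    using g by (simp add: conj_mat_mult quad flip: conj_mat_mult)
  then show ?thesis
    using g e by (simp add: conj_mat_add conj_mat_smult conj_mat_mult conj_mat_one
        sq_mat_mult_closed_add_commute)
qed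

lemma is_Yrep_conj:
  assumes "is_Yrep d n u m G T"
  shows "is_Yrep d n u m (\<lambda>i. conj_mat Q P (G i)) (\<lambda>j. conj_mat Q P (T j))"
proof -
  note G = is_YrepD(1)[OF assms] and T = is_YrepD(2)[OF assms]
    and G_comm = is_YrepD(3)[OF assms] and braid = is_YrepD(4)[OF assms]
    and T_comm = is_YrepD(5)[OF assms] and T_G = is_YrepD(6)[OF assms]
    and T_pow = is_YrepD(7)[OF assms] and quad = is_YrepD(8)[OF assms]
  note conj = conj_mat_mult[symmetric] conj_mat_add[symmetric] conj_mat_carrier G T
    sq_mat_mult_closed_add_commute[where n = m]
  show ?thesis
    unfolding is_Yrep_def
  proof (intro conjI ballI impI)
    fix i j :: nat assume ij: "i \<in> {1..<n}" "j \<in> {1..<n}" "i > j + 1 \<or> j > i + 1"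
    then have "G i * G j = G j * G i" by (rule G_comm)
    with ij show "conj_mat Q P (G i) * conj_mat Q P (G j) = conj_mat Q P (G j) * conj_mat Q P (G i)"
      by (simp add: conj)
  next
    fix i :: nat assume "i \<in> {1..n-2}"
    moreover from this have "Suc i \<in> {1..<n}" by auto
    ultimately show "conj_mat Q P (G i) * conj_mat Q P (G (Suc i)) * conj_mat Q P (G i)
      = conj_mat Q P (G (Suc i)) * conj_mat Q P (G i) * conj_mat Q P (G (Suc i))"
      by (simp add: conj braid)
  next
    fix i j :: nat assume "i \<in> {1..n}" "j \<in> {1..n}"
    then show "conj_mat Q P (T i) * conj_mat Q P (T j) = conj_mat Q P (T j) * conj_mat Q P (T i)"
      by (simp add: conj T_comm)
  next
    fix i j :: nat assume ij: "i \<in> {1..<n}" "j \<in> {1..n}"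
    then have "T (swp i j) \<in> carrier_mat m m" by (intro T swp_range)
    with ij show "conj_mat Q P (T j) * conj_mat Q P (G i) = conj_mat Q P (G i) * conj_mat Q P (T (swp i j))"
      by (simp add: conj T_G)
  next
    fix j :: nat assume "j \<in> {1..n}"
    then show "conj_mat Q P (T j) ^\<^sub>m d = 1\<^sub>m m"
      by (simp add: T_pow T conj_mat_one flip: conj_mat_pow)
  next
    fix i :: nat assume i: "i \<in> {1..<n}"
    then have "T i \<in> carrier_mat m m" "T (Suc i) \<in> carrier_mat m m" by (auto intro: T)
    then have E: "Eidem d m T i \<in> carrier_mat m m"
      and conj_E: "Eidem d m (\<lambda>j. conj_mat Q P (T j)) i = conj_mat Q P (Eidem d m T i)"
      by (simp_all add: Eidem_eq_Eidem_of conj_mat_Eidem_of Eidem_of_carrier)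
    show "conj_mat Q P (G i) * conj_mat Q P (G i) = 1\<^sub>m m
      + (u - 1) \<cdot>\<^sub>m Eidem d m (\<lambda>j. conj_mat Q P (T j)) i
      + (u - 1) \<cdot>\<^sub>m (Eidem d m (\<lambda>j. conj_mat Q P (T j)) i * conj_mat Q P (G i))"
      unfolding conj_E by (rule conj_mat_quadratic_relation[OF G[OF i] E quad[OF i]])
  qed (simp_all add: conj_mat_carrier G T)
qed

lemma conj_mat_S3_sum:
  "g1 \<in> carrier_mat m m \<Longrightarrow> g2 \<in> carrier_mat m m
    \<Longrightarrow> conj_mat Q P (S3_sum m g1 g2) = S3_sum m (conj_mat Q P g1) (conj_mat Q P g2)"
  unfolding S3_sum_def using P Q inverse
  by (simp add: conj_mat_add conj_mat_mult conj_mat_one conj_mat_carrier sq_mat_simps[where n = m])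

lemma conj_mat_eq_0_iff: "A \<in> carrier_mat m m \<Longrightarrow> conj_mat Q P A = 0\<^sub>m m m \<longleftrightarrow> A = 0\<^sub>m m m"
proof
  assume A: "A \<in> carrier_mat m m" and "conj_mat Q P A = 0\<^sub>m m m"
  then have "P * conj_mat Q P A * Q = 0\<^sub>m m m" using P Q by simp
  moreover have "P * conj_mat Q P A * Q = (P * Q) * A * (P * Q)"
    unfolding conj_mat_def using A P Q by (simp add: sq_mat_simps[where n = m])
  ultimately show "A = 0\<^sub>m m m" using A by (simp add: inverse)
qed (use P Q in \<open>simp add: conj_mat_def\<close>)

lemma S3_sum_conj_eq_0_iff:
  "g1 \<in> carrier_mat m m \<Longrightarrow> g2 \<in> carrier_mat m m \<Longrightarrow>
    S3_sum m (conj_mat Q P g1) (conj_mat Q P g2) = 0\<^sub>m m m \<longleftrightarrow> S3_sum m g1 g2 = 0\<^sub>m m m"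
  by (simp add: conj_mat_eq_0_iff S3_sum_carrier flip: conj_mat_S3_sum)

end

lemma spec_quadratic_relation:
  assumes spec_g: "spec_mat g gb" and spec_e: "spec_mat e eb"
    and g: "g \<in> carrier_mat m m" and e: "e \<in> carrier_mat m m"
    and quad: "g * g = 1\<^sub>m m + (uu - 1) \<cdot>\<^sub>m e + (uu - 1) \<cdot>\<^sub>m (e * g)"
  shows "gb * gb = 1\<^sub>m m"
proof -
  have "spec_mat (g * g) (gb * gb)" using spec_mat_mult[OF spec_g spec_g g g] .
  moreover have "spec_mat (1\<^sub>m m + (uu - 1) \<cdot>\<^sub>m e + (uu - 1) \<cdot>\<^sub>m (e * g))
      (1\<^sub>m m + 0\<^sub>m m m + 0\<^sub>m m m)"
    using spec_e e spec_mat_mult[OF spec_e spec_g e g] g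
    by (intro spec_mat_add[where r = m and c = m] spec_mat_one spec_mat_smult_u_minus_1)
      (auto simp: sq_mat_mult_closed_add_commute)
  ultimately have "gb * gb = 1\<^sub>m m + 0\<^sub>m m m + 0\<^sub>m m m" unfolding quad by (rule spec_mat_unique)
  then show ?thesis by simp
qed

lemma is_Yrep_specialise:
  assumes Y: "is_Yrep d n uu m G T"
    and spec_G: "\<And>i. i \<in> {1..<n} \<Longrightarrow> spec_mat (G i) (Gb i)"
    and spec_T: "\<And>j. j \<in> {1..n} \<Longrightarrow> spec_mat (T j) (Tb j)"
  shows "is_Yrep d n 1 m Gb Tb"
proof -
  note G = is_YrepD(1)[OF Y] and T = is_YrepD(2)[OF Y]
    and G_comm = is_YrepD(3)[OF Y] and braid = is_YrepD(4)[OF Y]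
    and T_comm = is_YrepD(5)[OF Y] and T_G = is_YrepD(6)[OF Y]
    and T_pow = is_YrepD(7)[OF Y] and quad = is_YrepD(8)[OF Y]
  have Gb: "Gb i \<in> carrier_mat m m" if "i \<in> {1..<n}" for i
    using spec_G[OF that] G[OF that] by (rule spec_mat_carrier)
  have Tb: "Tb j \<in> carrier_mat m m" if "j \<in> {1..n}" for j
    using spec_T[OF that] T[OF that] by (rule spec_mat_carrier)
  have spec_eq: "B = B'" if "spec_mat A B" "spec_mat A' B'" "A = A'" for A A' :: "ratf mat" and B B'
    using that spec_mat_unique by blast
  have spec_GG: "spec_mat (G i * G j) (Gb i * Gb j)" if "i \<in> {1..<n}" "j \<in> {1..<n}" for i j
    using spec_mat_mult[OF spec_G[OF that(1)] spec_G[OF that(2)] G[OF that(1)] G[OF that(2)]] .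
  have spec_GGG: "spec_mat (G i * G j * G i) (Gb i * Gb j * Gb i)"
    if "i \<in> {1..<n}" "j \<in> {1..<n}" for i j
  proof -
    have "G i * G j \<in> carrier_mat m m" using G that by (simp add: sq_mat_mult_closed_add_commute)
    then show ?thesis
      using spec_mat_mult[OF spec_GG[OF that] spec_G[OF that(1)] _ G[OF that(1)]] by blast
  qed
  have spec_TT: "spec_mat (T i * T j) (Tb i * Tb j)" if "i \<in> {1..n}" "j \<in> {1..n}" for i j
    using spec_mat_mult[OF spec_T[OF that(1)] spec_T[OF that(2)] T[OF that(1)] T[OF that(2)]] .
  have spec_TG: "spec_mat (T j * G i) (Tb j * Gb i)" "spec_mat (G i * T j) (Gb i * Tb j)"
    if "i \<in> {1..<n}" "j \<in> {1..n}" for i j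
    using spec_mat_mult[OF spec_T spec_G T G] spec_mat_mult[OF spec_G spec_T G T] that by auto
  show ?thesis
    unfolding is_Yrep_def
  proof (intro conjI ballI impI)
    fix i j :: nat assume ij: "i \<in> {1..<n}" "j \<in> {1..<n}" "i > j + 1 \<or> j > i + 1"
    then show "Gb i * Gb j = Gb j * Gb i"
      using spec_eq[OF spec_GG[of i j] spec_GG[of j i] G_comm[OF ij]] by simp
  next
    fix i :: nat assume i: "i \<in> {1..n-2}"
    then have "i \<in> {1..<n}" "Suc i \<in> {1..<n}" by auto
    then show "Gb i * Gb (Suc i) * Gb i = Gb (Suc i) * Gb i * Gb (Suc i)"
      using spec_eq[OF spec_GGG[of i "Suc i"] spec_GGG[of "Suc i" i] braid[OF i]] by simp
  next
    fix i j :: nat assume ij: "i \<in> {1..n}" "j \<in> {1..n}"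
    then show "Tb i * Tb j = Tb j * Tb i"
      using spec_eq[OF spec_TT[of i j] spec_TT[of j i] T_comm[OF ij]] by simp
  next
    fix i j :: nat assume ij: "i \<in> {1..<n}" "j \<in> {1..n}"
    moreover from this have "swp i j \<in> {1..n}" by (rule swp_range)
    ultimately show "Tb j * Gb i = Gb i * Tb (swp i j)"
      using spec_eq[OF spec_TG(1)[of i j] spec_TG(2)[of i "swp i j"] T_G[OF ij]] by simp
  next
    fix j :: nat assume j: "j \<in> {1..n}"
    then show "Tb j ^\<^sub>m d = 1\<^sub>m m"
      using spec_eq[OF spec_mat_pow[OF spec_T T] spec_mat_one T_pow[OF j]] by simp
  next
    fix i :: nat assume i: "i \<in> {1..<n}"
    then have i_T: "i \<in> {1..n}" "Suc i \<in> {1..n}" by auto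
    have E: "Eidem d m T i \<in> carrier_mat m m"
      unfolding Eidem_eq_Eidem_of by (intro Eidem_of_carrier T i_T)
    have spec_E: "spec_mat (Eidem d m T i) (Eidem d m Tb i)"
      unfolding Eidem_eq_Eidem_of by (intro spec_mat_Eidem_of spec_T T i_T)
    have "Eidem d m Tb i \<in> carrier_mat m m" using spec_E E by (rule spec_mat_carrier)
    then show "Gb i * Gb i = 1\<^sub>m m + (1 - 1) \<cdot>\<^sub>m Eidem d m Tb i
        + (1 - 1) \<cdot>\<^sub>m (Eidem d m Tb i * Gb i)"
      using spec_quadratic_relation[OF spec_G[OF i] spec_E G[OF i] E quad[OF i]] Gb[OF i]
      by (simp add: zero_smult_mat[where r = m and c = m] sq_mat_mult_closed_add_commute[where n = m])
  qed (simp_all add: Gb Tb)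
qed

lemma is_Yrep_relations_12:
  fixes G T :: "nat \<Rightarrow> 'a :: field mat"
  assumes Y: "is_Yrep d n u m G T" and n: "n \<ge> 3"
  defines "k1 \<equiv> (u - 1) \<cdot>\<^sub>m Eidem_of d m (T 1) (T 2)"
    and "k2 \<equiv> (u - 1) \<cdot>\<^sub>m Eidem_of d m (T 2) (T 3)"
    and "k3 \<equiv> (u - 1) \<cdot>\<^sub>m Eidem_of d m (T 1) (T 3)"
  shows "G 1 * G 1 = 1\<^sub>m m + k1 + k1 * G 1" and "G 2 * G 2 = 1\<^sub>m m + k2 + k2 * G 2"
    and "G 1 * G 2 * G 1 = G 2 * G 1 * G 2"
    and "G 2 * k1 = k3 * G 2" and "G 1 * k2 = k3 * G 1" and "G 1 * k3 = k2 * G 1"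
proof -
  have idx: "1 \<in> {1..<n}" "2 \<in> {1..<n}" "1 \<in> {1..n}" "2 \<in> {1..n}" "3 \<in> {1..n}" "1 \<in> {1..n-2}"
    using n by auto
  note G = is_YrepD(1)[OF Y idx(1)] is_YrepD(1)[OF Y idx(2)]
    and T = is_YrepD(2)[OF Y idx(3)] is_YrepD(2)[OF Y idx(4)] is_YrepD(2)[OF Y idx(5)]
    and quad = is_YrepD(8)[OF Y idx(1)] is_YrepD(8)[OF Y idx(2)]
    and braid = is_YrepD(4)[OF Y idx(6)] and T_G = is_YrepD(6)[OF Y]
  have E: "Eidem_of d m (T 1) (T 2) \<in> carrier_mat m m" "Eidem_of d m (T 2) (T 3) \<in> carrier_mat m m"
    "Eidem_of d m (T 1) (T 3) \<in> carrier_mat m m"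
    using T by (simp_all add: Eidem_of_carrier)
  have "Eidem d m T 1 = Eidem_of d m (T 1) (T 2)"
    unfolding Eidem_eq_Eidem_of Suc_1 ..
  moreover have "Eidem d m T 2 = Eidem_of d m (T 2) (T 3)"
    by (simp add: Eidem_eq_Eidem_of)
  ultimately show "G 1 * G 1 = 1\<^sub>m m + k1 + k1 * G 1" "G 2 * G 2 = 1\<^sub>m m + k2 + k2 * G 2"
    using quad unfolding k1_def k2_def using G E by (simp_all add: mult_smult_assoc_mat)
  show "G 1 * G 2 * G 1 = G 2 * G 1 * G 2"
    using braid by (simp add: numeral_2_eq_2)
  have "G 2 * T 1 = T 1 * G 2" "G 2 * T 2 = T 3 * G 2"
    "G 1 * T 1 = T 2 * G 1" "G 1 * T 2 = T 1 * G 1" "G 1 * T 3 = T 3 * G 1"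
    using T_G[of 2 1] T_G[of 2 3] T_G[of 1 2] T_G[of 1 1] T_G[of 1 3] idx by (simp_all add: swp_def numeral_2_eq_2)
  then have "G 2 * Eidem_of d m (T 1) (T 2) = Eidem_of d m (T 1) (T 3) * G 2"
    "G 1 * Eidem_of d m (T 2) (T 3) = Eidem_of d m (T 1) (T 3) * G 1"
    "G 1 * Eidem_of d m (T 1) (T 3) = Eidem_of d m (T 2) (T 3) * G 1"
    using G T by (auto intro!: Eidem_of_commute)
  then show "G 2 * k1 = k3 * G 2" "G 1 * k2 = k3 * G 1" "G 1 * k3 = k2 * G 1"
    unfolding k1_def k2_def k3_def using G E
    by (simp_all add: mult_smult_distrib mult_smult_assoc_mat)
qed

lemma is_Yrep_at_1_relations_12:
  fixes G T :: "nat \<Rightarrow> 'a :: field mat"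
  assumes Y: "is_Yrep d n 1 m G T" and n: "n \<ge> 3"
  shows "G 1 \<in> carrier_mat m m" "G 2 \<in> carrier_mat m m" "G 1 * G 1 = 1\<^sub>m m" "G 2 * G 2 = 1\<^sub>m m"
    "G 1 * G 2 * G 1 = G 2 * G 1 * G 2"
proof -
  show G: "G 1 \<in> carrier_mat m m" "G 2 \<in> carrier_mat m m"
    using n by (auto intro: is_YrepD(1)[OF Y])
  have "T 1 \<in> carrier_mat m m" "T 2 \<in> carrier_mat m m" "T 3 \<in> carrier_mat m m"
    using n by (auto intro: is_YrepD(2)[OF Y])
  then have "Eidem_of d m (T 1) (T 2) \<in> carrier_mat m m" "Eidem_of d m (T 2) (T 3) \<in> carrier_mat m m"
    by (simp_all add: Eidem_of_carrier)
  then show "G 1 * G 1 = 1\<^sub>m m" "G 2 * G 2 = 1\<^sub>m m" "G 1 * G 2 * G 1 = G 2 * G 1 * G 2"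
    using is_Yrep_relations_12(1-3)[OF Y n] G by (simp_all add: zero_smult_mat)
qed

lemma spec_mat_S3_sum:
  assumes "spec_mat g1 h1" "spec_mat g2 h2" "g1 \<in> carrier_mat m m" "g2 \<in> carrier_mat m m"
  shows "spec_mat (S3_sum m g1 g2) (S3_sum m h1 h2)"
  unfolding S3_sum_def using assms
  by (intro spec_mat_add spec_mat_mult spec_mat_one) (auto simp: sq_mat_mult_closed_add_commute)

lemma Xelt_quasi_idempotent:
  assumes Y: "is_Yrep d n uu m G T" and n: "n \<ge> 3"
    and spec_T: "\<And>j. j \<in> {1..n} \<Longrightarrow> spec_mat (T j) (Tb j)"
  obtains L where "L \<in> carrier_mat m m" and "spec_mat L (6 \<cdot>\<^sub>m 1\<^sub>m m)"
    and "Xelt m G * Xelt m G = L * Xelt m G"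
proof -
  define k1 k2 k3 where "k1 = (uu - 1) \<cdot>\<^sub>m Eidem_of d m (T 1) (T 2)"
    and "k2 = (uu - 1) \<cdot>\<^sub>m Eidem_of d m (T 2) (T 3)"
    and "k3 = (uu - 1) \<cdot>\<^sub>m Eidem_of d m (T 1) (T 3)"
  define L where "L = 1\<^sub>m m + (1\<^sub>m m + k2) + (1\<^sub>m m + k3) * (1\<^sub>m m + k2) + (1\<^sub>m m + k1)
    + (1\<^sub>m m + k3) * (1\<^sub>m m + k1) + (1\<^sub>m m + k2) * (1\<^sub>m m + k3) * (1\<^sub>m m + k1)"
  note T = is_YrepD(2)[OF Y]
  have G: "G 1 \<in> carrier_mat m m" "G 2 \<in> carrier_mat m m"
    using n by (auto intro: is_YrepD(1)[OF Y])
  have E: "Eidem_of d m (T a) (T b) \<in> carrier_mat m m"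
    "spec_mat (Eidem_of d m (T a) (T b)) (Eidem_of d m (Tb a) (Tb b))"
    if "a \<in> {1..n}" "b \<in> {1..n}" for a b
    using that by (simp_all add: Eidem_of_carrier spec_mat_Eidem_of spec_T T)
  have k: "k \<in> carrier_mat m m" "spec_mat k (0\<^sub>m m m)" if "k \<in> {k1, k2, k3}" for k
    using that E[of 1 2] E[of 2 3] E[of 1 3] n spec_mat_smult_u_minus_1
    unfolding k1_def k2_def k3_def by auto
  have spec_f: "spec_mat (1\<^sub>m m + k) (1\<^sub>m m)" if "k \<in> {k1, k2, k3}" for k
  proof -
    have "spec_mat (1\<^sub>m m + k) (1\<^sub>m m + 0\<^sub>m m m)"
      using that by (intro spec_mat_add[OF spec_mat_one k(2) _ k(1)]) auto
    then show ?thesis by simp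
  qed
  have "spec_mat L (1\<^sub>m m + 1\<^sub>m m + 1\<^sub>m m * 1\<^sub>m m + 1\<^sub>m m + 1\<^sub>m m * 1\<^sub>m m + 1\<^sub>m m * 1\<^sub>m m * 1\<^sub>m m)"
    unfolding L_def using k
    by (intro spec_mat_add[where r = m and c = m] spec_mat_mult[where r = m and k = m and c = m]
        spec_mat_one spec_f) (auto simp: sq_mat_mult_closed_add_commute)
  also have "1\<^sub>m m + 1\<^sub>m m + 1\<^sub>m m * 1\<^sub>m m + 1\<^sub>m m + 1\<^sub>m m * 1\<^sub>m m + 1\<^sub>m m * 1\<^sub>m m * 1\<^sub>m m
      = (6 :: complex) \<cdot>\<^sub>m 1\<^sub>m m"
    by (rule eq_matI) auto
  finally have "spec_mat L (6 \<cdot>\<^sub>m 1\<^sub>m m)" .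
  moreover have "L \<in> carrier_mat m m"
    unfolding L_def using k by (simp add: sq_mat_mult_closed_add_commute)
  moreover have "Xelt m G * Xelt m G = L * Xelt m G"
    unfolding Xelt_eq_S3_sum L_def
    using is_Yrep_relations_12[OF Y n, folded k1_def k2_def k3_def] G k
    by (intro S3_sum_square) auto
  ultimately show ?thesis by (intro that)
qed

lemma Xelt_eq_0_iff_specialisation:
  assumes Y: "is_Yrep d n uu m G T" and n: "n \<ge> 3"
    and spec_G: "\<And>i. i \<in> {1..<n} \<Longrightarrow> spec_mat (G i) (Gb i)"
    and spec_T: "\<And>j. j \<in> {1..n} \<Longrightarrow> spec_mat (T j) (Tb j)"
  shows "Xelt m G = 0\<^sub>m m m \<longleftrightarrow> S3_sum m (Gb 1) (Gb 2) = 0\<^sub>m m m"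
proof -
  have G: "G 1 \<in> carrier_mat m m" "G 2 \<in> carrier_mat m m"
    using n by (auto intro: is_YrepD(1)[OF Y])
  have spec_X: "spec_mat (Xelt m G) (S3_sum m (Gb 1) (Gb 2))"
    unfolding Xelt_eq_S3_sum using n G by (intro spec_mat_S3_sum spec_G) auto
  obtain L where L: "L \<in> carrier_mat m m" and spec_L: "spec_mat L (6 \<cdot>\<^sub>m 1\<^sub>m m)"
    and XX: "Xelt m G * Xelt m G = L * Xelt m G"
    using Xelt_quasi_idempotent[OF Y n spec_T] by blast
  have six_cancel: "B = 0\<^sub>m m m" if "B \<in> carrier_mat m m" "(6 \<cdot>\<^sub>m 1\<^sub>m m) * B = 0\<^sub>m m m"
    for B :: "complex mat"
  proof -
    have "6 \<cdot>\<^sub>m B = 6 \<cdot>\<^sub>m 0\<^sub>m m m"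
      using that by (simp add: mult_smult_assoc_mat[of _ m m _ m])
    then show ?thesis by (rule smult_mat_cancel[rotated]) simp
  qed
  show ?thesis
  proof
    assume "Xelt m G = 0\<^sub>m m m"
    then show "S3_sum m (Gb 1) (Gb 2) = 0\<^sub>m m m"
      using spec_X spec_mat_zero spec_mat_unique by metis
  next
    assume "S3_sum m (Gb 1) (Gb 2) = 0\<^sub>m m m"
    then show "Xelt m G = 0\<^sub>m m m"
      using spec_X G XX six_cancel
      by (intro spec_0_quasi_idempotent_eq_0[OF _ L _ spec_L]) (auto simp: Xelt_eq_S3_sum S3_sum_carrier)
  qed
qed

section \<open>Fixed vectors and the trivial summand\<close>

lemma linear_functional_decomposition:
  fixes l :: "'a :: field vec \<Rightarrow> 'a"
  assumes l_add: "\<forall>x\<in>carrier_vec m. \<forall>z\<in>carrier_vec m. l (x + z) = l x + l z"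
    and l_smult: "\<forall>c. \<forall>x\<in>carrier_vec m. l (c \<cdot>\<^sub>v x) = c * l x"
    and y: "y \<in> carrier_vec m" "l y \<noteq> 0" and x: "x \<in> carrier_vec m"
  defines "c \<equiv> l x / l y"
  shows "x + (- c) \<cdot>\<^sub>v y \<in> carrier_vec m" "l (x + (- c) \<cdot>\<^sub>v y) = 0"
    and "x = c \<cdot>\<^sub>v y + (x + (- c) \<cdot>\<^sub>v y)"
    and "\<And>c' z. z \<in> carrier_vec m \<Longrightarrow> l z = 0 \<Longrightarrow> x = c' \<cdot>\<^sub>v y + z
      \<Longrightarrow> c' = c \<and> z = x + (- c) \<cdot>\<^sub>v y"
proof -
  show "x + (- c) \<cdot>\<^sub>v y \<in> carrier_vec m" "l (x + (- c) \<cdot>\<^sub>v y) = 0"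
    "x = c \<cdot>\<^sub>v y + (x + (- c) \<cdot>\<^sub>v y)"
    using x y l_add l_smult by (auto simp: c_def intro!: eq_vecI)
  fix c' z assume z: "z \<in> carrier_vec m" "l z = 0" and x_eq: "x = c' \<cdot>\<^sub>v y + z"
  then have "l x = c' * l y" using y l_add l_smult by simp
  with y have "c' = c" by (simp add: c_def)
  moreover have "z = x + (- c') \<cdot>\<^sub>v y"
    using x_eq y z by (auto intro!: eq_vecI)
  ultimately show "c' = c \<and> z = x + (- c) \<cdot>\<^sub>v y" by simp
qed

locale E_intertwiner =
  fixes d n :: nat and lam :: "nat \<Rightarrow> nat list" and m :: nat and g1 g2 :: "complex mat"
    and \<phi> :: "complex vec \<Rightarrow> gelt \<Rightarrow> complex"
  assumes bij: "bij_betw \<phi> (carrier_vec m) (Emod d n lam)"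
    and phi_add: "\<And>v w. v \<in> carrier_vec m \<Longrightarrow> w \<in> carrier_vec m \<Longrightarrow> \<phi> (v + w) = (\<lambda>x. \<phi> v x + \<phi> w x)"
    and phi_smult: "\<And>c v. v \<in> carrier_vec m \<Longrightarrow> \<phi> (c \<cdot>\<^sub>v v) = (\<lambda>x. c * \<phi> v x)"
    and g_carrier: "g1 \<in> carrier_mat m m" "g2 \<in> carrier_mat m m"
    and phi_g1: "\<And>v. v \<in> carrier_vec m \<Longrightarrow> \<phi> (g1 *\<^sub>v v) = gact d n (gS 1) (\<phi> v)"
    and phi_g2: "\<And>v. v \<in> carrier_vec m \<Longrightarrow> \<phi> (g2 *\<^sub>v v) = gact d n (gS 2) (\<phi> v)"
begin

lemma phi_image: "\<phi> ` carrier_vec m = Emod d n lam"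
  using bij by (simp add: bij_betw_def)

lemma phi_eq_iff: "v \<in> carrier_vec m \<Longrightarrow> w \<in> carrier_vec m \<Longrightarrow> \<phi> v = \<phi> w \<longleftrightarrow> v = w"
  using bij by (auto simp: bij_betw_def dest: inj_onD)

lemma phi_zero: "\<phi> (0\<^sub>v m) = (\<lambda>_. 0)"
  using phi_smult[of "0\<^sub>v m" 0] unfolding zero_smult_zero_vec by simp

lemma fixed_vec_if_triv_summand:
  assumes "triv_summand d n lam"
  obtains y where "y \<in> carrier_vec m" "y \<noteq> 0\<^sub>v m" "g1 *\<^sub>v y = y" "g2 *\<^sub>v y = y"
proof -
  from assms obtain v where v: "v \<in> Emod d n lam" "v \<noteq> (\<lambda>_. 0)"
    "gact d n (gS 1) v = v" "gact d n (gS 2) v = v"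
    unfolding triv_summand_def by (elim exE conjE) (rule that; assumption)
  then obtain y where y: "y \<in> carrier_vec m" "v = \<phi> y" using phi_image by auto
  show ?thesis
  proof (rule that[OF y(1)])
    show "y \<noteq> 0\<^sub>v m" using v(2) y phi_zero by auto
    show "g1 *\<^sub>v y = y" "g2 *\<^sub>v y = y"
      using v(3,4) y g_carrier by (simp_all add: phi_g1 phi_g2 flip: phi_eq_iff)
  qed
qed

lemma Emod_unique_decomposition:
  fixes l :: "complex vec \<Rightarrow> complex"
  assumes lin: "\<forall>x\<in>carrier_vec m. \<forall>z\<in>carrier_vec m. l (x + z) = l x + l z"
      "\<forall>c. \<forall>x\<in>carrier_vec m. l (c \<cdot>\<^sub>v x) = c * l x"
    and y: "y \<in> carrier_vec m" "l y \<noteq> 0" and e: "e \<in> Emod d n lam"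
  shows "\<exists>!(c, w). w \<in> \<phi> ` {x \<in> carrier_vec m. l x = 0} \<and> e = (\<lambda>g. c * \<phi> y g + w g)"
proof -
  define K where "K = {x \<in> carrier_vec m. l x = 0}"
  from e obtain x where x: "x \<in> carrier_vec m" "e = \<phi> x" using phi_image by auto
  have decomp: "e = (\<lambda>g. c * \<phi> y g + \<phi> z g) \<longleftrightarrow> x = c \<cdot>\<^sub>v y + z"
    if "z \<in> carrier_vec m" for c z
    using x y that by (simp add: phi_smult phi_add flip: phi_eq_iff)
  define c z where "c = l x / l y" and "z = x + (- c) \<cdot>\<^sub>v y"
  note decomposition = linear_functional_decomposition[OF lin y x(1), folded c_def]
  show ?thesis
    unfolding K_def[symmetric]
  proof (rule ex1I[of _ "(c, \<phi> z)"])
    show "case (c, \<phi> z) of (c, w) \<Rightarrow> w \<in> \<phi> ` K \<and> e = (\<lambda>g. c * \<phi> y g + w g)"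
      using decomposition(1-3) decomp unfolding K_def z_def by auto
  next
    fix p assume "case p of (c', w) \<Rightarrow> w \<in> \<phi> ` K \<and> e = (\<lambda>g. c' * \<phi> y g + w g)"
    then obtain c' z' where "p = (c', \<phi> z')" "z' \<in> K" "e = (\<lambda>g. c' * \<phi> y g + \<phi> z' g)"
      by auto
    then show "p = (c, \<phi> z)" using decomposition(4) decomp unfolding K_def z_def by auto
  qed
qed

lemma triv_summand_if_invariant_functional:
  fixes l :: "complex vec \<Rightarrow> complex"
  assumes y: "y \<in> carrier_vec m" and fixed: "g1 *\<^sub>v y = y" "g2 *\<^sub>v y = y"
    and lin: "\<forall>x\<in>carrier_vec m. \<forall>z\<in>carrier_vec m. l (x + z) = l x + l z"
      "\<forall>c. \<forall>x\<in>carrier_vec m. l (c \<cdot>\<^sub>v x) = c * l x"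
    and l_inv: "\<forall>x\<in>carrier_vec m. l (g1 *\<^sub>v x) = l x \<and> l (g2 *\<^sub>v x) = l x"
    and l_y: "l y \<noteq> 0"
  shows "triv_summand d n lam"
proof -
  define K where "K = {x \<in> carrier_vec m. l x = 0}"
  have l_add: "l (x + z) = l x + l z" if "x \<in> carrier_vec m" "z \<in> carrier_vec m" for x z
    using lin(1) that by blast
  have l_smult: "l (c \<cdot>\<^sub>v x) = c * l x" if "x \<in> carrier_vec m" for c x
    using lin(2) that by blast
  have l_zero: "l (0\<^sub>v m) = 0" using l_smult[of "0\<^sub>v m" 0] unfolding zero_smult_zero_vec by simp
  have "y \<noteq> 0\<^sub>v m" using l_y l_zero by auto
  then have v: "\<phi> y \<in> Emod d n lam" "\<phi> y \<noteq> (\<lambda>_. 0)"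
    using y phi_image by (auto simp flip: phi_zero simp add: phi_eq_iff)
  have v_fixed: "gact d n (gS 1) (\<phi> y) = \<phi> y" "gact d n (gS 2) (\<phi> y) = \<phi> y"
    using phi_g1[OF y, unfolded fixed(1)] phi_g2[OF y, unfolded fixed(2)] by simp_all
  have W_sub: "\<phi> ` K \<subseteq> Emod d n lam" unfolding K_def phi_image[symmetric] by auto
  have W_zero: "(\<lambda>_. 0) \<in> \<phi> ` K"
    unfolding K_def using l_zero phi_zero by (auto intro!: image_eqI[of _ _ "0\<^sub>v m"])
  have W_add: "\<forall>w1\<in>\<phi> ` K. \<forall>w2\<in>\<phi> ` K. (\<lambda>x. w1 x + w2 x) \<in> \<phi> ` K"
    unfolding K_def by (auto simp: l_add simp flip: phi_add intro!: imageI)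
  have W_smult: "\<forall>c::complex. \<forall>w\<in>\<phi> ` K. (\<lambda>x. c * w x) \<in> \<phi> ` K"
    unfolding K_def by (auto simp: l_smult simp flip: phi_smult intro!: imageI)
  have W_inv: "\<forall>w\<in>\<phi> ` K. gact d n (gS 1) w \<in> \<phi> ` K \<and> gact d n (gS 2) w \<in> \<phi> ` K"
  proof
    fix w assume "w \<in> \<phi> ` K"
    then obtain x where x: "x \<in> K" "w = \<phi> x" by blast
    then have "g1 *\<^sub>v x \<in> K" "g2 *\<^sub>v x \<in> K" using g_carrier l_inv unfolding K_def by auto
    moreover have "gact d n (gS 1) w = \<phi> (g1 *\<^sub>v x)" "gact d n (gS 2) w = \<phi> (g2 *\<^sub>v x)"
      using x unfolding K_def by (simp_all add: phi_g1 phi_g2)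
    ultimately show "gact d n (gS 1) w \<in> \<phi> ` K \<and> gact d n (gS 2) w \<in> \<phi> ` K" by auto
  qed
  have W_complement: "\<forall>e\<in>Emod d n lam. \<exists>!(c, w). w \<in> \<phi> ` K \<and> e = (\<lambda>g. c * \<phi> y g + w g)"
    unfolding K_def by (intro ballI Emod_unique_decomposition[OF lin y l_y])
  show ?thesis
    unfolding triv_summand_def
    by (rule exI[of _ "\<phi> y"], rule exI[of _ "\<phi> ` K"])
      (intro conjI v v_fixed W_sub W_zero W_add W_smult W_inv W_complement)
qed

lemma triv_summand_if_S3_sum_ne_0:
  assumes inv1: "g1 * g1 = 1\<^sub>m m" and inv2: "g2 * g2 = 1\<^sub>m m" and braid: "g1 * g2 * g1 = g2 * g1 * g2"
    and "S3_sum m g1 g2 \<noteq> 0\<^sub>m m m"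
  shows "triv_summand d n lam"
proof -
  define X where "X = S3_sum m g1 g2"
  have X: "X \<in> carrier_mat m m" unfolding X_def using g_carrier by (rule S3_sum_carrier)
  note absorb = S3_sum_absorb[OF g_carrier inv1 inv2 braid, folded X_def]
  have "\<exists>i j. i < m \<and> j < m \<and> X $$ (i, j) \<noteq> 0"
  proof (rule ccontr)
    assume "\<not> (\<exists>i j. i < m \<and> j < m \<and> X $$ (i, j) \<noteq> 0)"
    then have "X = 0\<^sub>m m m" using X by (intro eq_matI) auto
    with assms(4) show False unfolding X_def ..
  qed
  then obtain i j where ij: "i < m" "j < m" "X $$ (i, j) \<noteq> 0" by blast
  define y where "y = X *\<^sub>v unit_vec m j"
  have y: "y \<in> carrier_vec m" "y $ i \<noteq> 0"
    unfolding y_def using X ij by auto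
  have y_fixed: "g1 *\<^sub>v y = y" "g2 *\<^sub>v y = y"
    unfolding y_def assoc_mult_mat_vec[OF g_carrier(1) X unit_vec_carrier, symmetric]
      assoc_mult_mat_vec[OF g_carrier(2) X unit_vec_carrier, symmetric] absorb by simp_all
  define l where "l x = (X *\<^sub>v x) $ i" for x
  have "\<forall>x\<in>carrier_vec m. \<forall>z\<in>carrier_vec m. l (x + z) = l x + l z"
    unfolding l_def using X ij by (simp add: mult_add_distrib_mat_vec[OF X])
  moreover have "\<forall>c. \<forall>x\<in>carrier_vec m. l (c \<cdot>\<^sub>v x) = c * l x"
    unfolding l_def using X ij by (simp add: mult_mat_vec[OF X])
  moreover have "\<forall>x\<in>carrier_vec m. l (g1 *\<^sub>v x) = l x \<and> l (g2 *\<^sub>v x) = l x"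
    unfolding l_def using assoc_mult_mat_vec[OF X g_carrier(1)] assoc_mult_mat_vec[OF X g_carrier(2)]
    by (simp add: absorb)
  moreover have "l y \<noteq> 0"
    unfolding l_def X_def using S3_sum_fixed_vec[OF g_carrier y(1) y_fixed] y ij by simp
  ultimately show ?thesis
    by (rule triv_summand_if_invariant_functional[OF y(1) y_fixed])
qed

lemma S3_sum_eq_0_iff_not_triv_summand:
  assumes inv1: "g1 * g1 = 1\<^sub>m m" and inv2: "g2 * g2 = 1\<^sub>m m" and braid: "g1 * g2 * g1 = g2 * g1 * g2"
  shows "S3_sum m g1 g2 = 0\<^sub>m m m \<longleftrightarrow> \<not> triv_summand d n lam"
proof
  assume X0: "S3_sum m g1 g2 = 0\<^sub>m m m"
  show "\<not> triv_summand d n lam"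
  proof
    assume "triv_summand d n lam"
    then obtain y where y: "y \<in> carrier_vec m" "y \<noteq> 0\<^sub>v m" "g1 *\<^sub>v y = y" "g2 *\<^sub>v y = y"
      by (rule fixed_vec_if_triv_summand)
    have "0\<^sub>m m m *\<^sub>v y = 0\<^sub>v m" using y(1) by (intro eq_vecI) auto
    then have six_y: "6 \<cdot>\<^sub>v y = 0\<^sub>v m"
      using S3_sum_fixed_vec[OF g_carrier y(1,3,4)] by (simp add: X0)
    have "6 * y $ k = 0" if "k < m" for k
      using y(1) that arg_cong[OF six_y, of "\<lambda>v. v $ k"] by simp
    then have "y = 0\<^sub>v m" using y(1) by (auto intro!: eq_vecI)
    with y(2) show False ..
  qed
next
  assume "\<not> triv_summand d n lam"
  then show "S3_sum m g1 g2 = 0\<^sub>m m m"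
    using triv_summand_if_S3_sum_ne_0[OF inv1 inv2 braid] by (rule contrapos_np)
qed

end

lemma iso_to_E_intertwiner:
  assumes "iso_to_E d n lam m Gb Tb" and "n \<ge> 3"
    and "Gb 1 \<in> carrier_mat m m" "Gb 2 \<in> carrier_mat m m"
  obtains \<phi> where "E_intertwiner d n lam m (Gb 1) (Gb 2) \<phi>"
proof -
  from assms(1) obtain \<phi> where "bij_betw \<phi> (carrier_vec m) (Emod d n lam)"
    and "\<forall>v\<in>carrier_vec m. \<forall>w\<in>carrier_vec m. \<phi> (v + w) = (\<lambda>x. \<phi> v x + \<phi> w x)"
    and "\<forall>c. \<forall>v\<in>carrier_vec m. \<phi> (c \<cdot>\<^sub>v v) = (\<lambda>x. c * \<phi> v x)"
    and "\<forall>i\<in>{1..<n}. \<forall>v\<in>carrier_vec m. \<phi> (Gb i *\<^sub>v v) = gact d n (gS i) (\<phi> v)"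
    unfolding iso_to_E_def by blast
  with assms(2-4) have "E_intertwiner d n lam m (Gb 1) (Gb 2) \<phi>"
    by unfold_locales auto
  then show ?thesis by (rule that)
qed

theorem mainTheorem7:
  fixes d n m :: nat and lam :: "nat \<Rightarrow> nat list" and G T :: "nat \<Rightarrow> ratf mat"
  assumes "d \<ge> 1" and "n \<ge> 3" and "lam \<in> dpartitions d n"
    and "is_rho d n lam m G T"
  shows "Xelt m G = 0\<^sub>m m m \<longleftrightarrow> \<not> triv_summand d n lam"
proof -
  from assms(4) obtain P Q Gb Tb where Y: "is_Yrep d n uu m G T"
    and P: "P \<in> carrier_mat m m" and Q: "Q \<in> carrier_mat m m" and PQ: "P * Q = 1\<^sub>m m"
    and spec_G: "\<forall>i\<in>{1..<n}. spec_mat (conj_mat Q P (G i)) (Gb i)"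
    and spec_T: "\<forall>j\<in>{1..n}. spec_mat (conj_mat Q P (T j)) (Tb j)"
    and iso: "iso_to_E d n lam m Gb Tb"
    unfolding is_rho_def conj_mat_def by blast
  have Y': "is_Yrep d n uu m (\<lambda>i. conj_mat Q P (G i)) (\<lambda>j. conj_mat Q P (T j))"
    using P Q PQ Y by (rule is_Yrep_conj)
  have Yb: "is_Yrep d n 1 m Gb Tb"
    using Y' spec_G spec_T by (intro is_Yrep_specialise) auto
  note Gb = is_Yrep_at_1_relations_12[OF Yb \<open>n \<ge> 3\<close>]
  obtain \<phi> where \<phi>: "E_intertwiner d n lam m (Gb 1) (Gb 2) \<phi>"
    using iso \<open>n \<ge> 3\<close> Gb(1,2) by (rule iso_to_E_intertwiner)
  have "G 1 \<in> carrier_mat m m" "G 2 \<in> carrier_mat m m"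
    using \<open>n \<ge> 3\<close> by (auto intro: is_YrepD(1)[OF Y])
  then have "Xelt m G = 0\<^sub>m m m \<longleftrightarrow> Xelt m (\<lambda>i. conj_mat Q P (G i)) = 0\<^sub>m m m"
    by (simp add: Xelt_eq_S3_sum S3_sum_conj_eq_0_iff[OF P Q PQ])
  also have "\<dots> \<longleftrightarrow> S3_sum m (Gb 1) (Gb 2) = 0\<^sub>m m m"
    using Y' \<open>n \<ge> 3\<close> spec_G spec_T by (intro Xelt_eq_0_iff_specialisation) auto
  also have "\<dots> \<longleftrightarrow> \<not> triv_summand d n lam"
    using \<phi> Gb(3-5) by (rule E_intertwiner.S3_sum_eq_0_iff_not_triv_summand)
  finally show ?thesis .
qed

end
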